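(* Assume $\omega_a\ne0$ and $\omega_{-b}\ne0$, and let $G_k:=\sum_{\ell=0}^kF_{k,\ell}$ for $k\ge0$. Then $$\sum_{k\ge0}G_kz^k=\frac{\widetilde N(1,z)}{\widetilde D(z)D(z)},$$ where $\widetilde D(z)D(z)$ is a polynomial with constant term $1$ and degree $\binom{a+b+1}{a}$; consequently $(G_k)_{k\ge0}$ satisfies a linear recurrence with constant coefficients of order $\binom{a+b+1}{a}$. Moreover, whenever $F_{k+1}\ne0$, $\sum_{\ell=0}^{k}[(1-A_k)^{-1}]_{0,\ell}=G_k/F_{k+1}$.
   Context: Let $S$ be a finite set of integers with $a:=\max S\ge 1$ and $b:=-\min S\ge 1$. Each $s\in S$ carries a weight $\omega_s$ in a field $K$ of characteristic $0$; set $\omega_s:=0$ for $s\in\mathbb Z\setminus S$, and for $s\in\mathbb Z$ put $\beta_s:=\delta_{s,0}-\omega_s$ and $\widetilde\beta_s:=-\beta_{s+1}$. For $k\ge0$, $A_k$ is the $(k+1)\times(k+1)$ matrix with rows and columns indexed by $0,\dots,k$ whose $(i,j)$ entry is $\omega_{j-i}$; $F_k:=\det(1-A_{k-1})$ for $k\ge1$, $F_0:=1$. The entry $[(1-A_k)^{-1}]_{0,\ell}$ is, for formal weights, the weighted generating function of meanders with steps in $S$ staying in $[0,k]$ and ending at $\ell$, and $\sum_\ell$ of these is the generating function $M_k$ of meanders of height at most $k$. For $0\le\ell\le k$, $F_{k,\ell}$ is the $(\ell,0)$ cofactor of $1-A_k$, i.e. $(-1)^\ell$ times the determinant of the matrix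 obtained from $1-A_k$ by deleting row $\ell$ and column $0$. Notation: $[m,n]:=\{i\in\mathbb Z: m\le i\le n\}$, $X+c:=\{x+c:x\in X\}$; an $n$-subset is a subset of cardinality $n$. $I_0:=[0,a-1]$, $\widetilde I_0:=[0,a-2]$ (empty if $a=1$). For a finite set $I\subseteq\mathbb Z$ and $s\in\mathbb Z$, $\epsilon_s(I):=(-1)^{\#\{i\in I:\ i<s\}}$. $\mathbf T$ is the square matrix with rows and columns indexed by the $a$-subsets of $[-b,a-1]$ and entries $\mathbf T[I,J]:=\epsilon_s(I)\beta_s$ if there is an integer $s$ with $I\cup\{a\}=(J+1)\cup\{s\}$, and $0$ otherwise. $\widetilde{\mathbf T}$ is the square matrix indexed by the $(a-1)$-subsets of $[-b-1,a-2]$ with $\widetilde{\mathbf T}[I,J]:=\epsilon_s(I)\widetilde\beta_s$ if there is an integer $s$ with $I\cup\{a-1\}=(J+1)\cup\{s\}$, and $0$ otherwise. $\mathbf U$ has rows indexed by the $(a-1)$-subsets of $[-b-1,a-2]$, columns by the $a$-subsets of $[-b,a-1]$, and $\mathbf U[I,J]=1$ if $I\cup\{a-1\}=J$, $0$ otherwise. $D(z):=\det(1-z\mathbf T)$, $\widetilde D(z):=\det(1-z\widetilde{\mathbf T})$, and $\widetilde N(u,z)$ is the $(\widetilde I_0,I_0)$ entry of $\operatorname{adj}(1-uz\widetilde{\mathbf T})\,\mathbf U\,\operatorname{adj}(1-z\mathbf T)$, adj denoting the adjugate. *)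

theory Defs
  imports "HOL-Combinatorics.Permutations"
          "HOL-Computational_Algebra.Polynomial"
          "HOL-Computational_Algebra.Formal_Power_Series"
          "HOL-Computational_Algebra.Polynomial_FPS"
begin

text \<open>A square matrix over a finite index set I is a function M :: 'i => 'i => 'r
  (only the entries with both indices in I matter).\<close>

definition det_on :: "'i set \<Rightarrow> ('i \<Rightarrow> 'i \<Rightarrow> 'r::comm_ring_1) \<Rightarrow> 'r" where
  "det_on I M = (\<Sum>p \<in> {p. p permutes I}. of_int (sign p) * (\<Prod>i\<in>I. M i (p i)))"

text \<open>Adjugate: adj(M)[i,j] is the (j,i) cofactor, i.e. the determinant of M with
  row j replaced by the i-th unit row.\<close>
definition adj_on :: "'i set \<Rightarrow> ('i \<Rightarrow> 'i \<Rightarrow> 'r::comm_ring_1) \<Rightarrow> 'i \<Rightarrow> 'i \<Rightarrow> 'r" where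
  "adj_on I M i j = det_on I (\<lambda>r c. if r = j then (if c = i then 1 else 0) else M r c)"

text \<open>Matrix inverse on index set I (meaningful when M is invertible).\<close>
definition inv_on :: "'i set \<Rightarrow> ('i \<Rightarrow> 'i \<Rightarrow> 'r::comm_ring_1) \<Rightarrow> 'i \<Rightarrow> 'i \<Rightarrow> 'r" where
  "inv_on I M = (SOME B.
      (\<forall>i\<in>I. \<forall>j\<in>I. (\<Sum>k\<in>I. M i k * B k j) = (if i = j then 1 else 0)) \<and>
      (\<forall>i\<in>I. \<forall>j\<in>I. (\<Sum>k\<in>I. B i k * M k j) = (if i = j then 1 else 0)))"

definition betaw :: "(int \<Rightarrow> 'a::field) \<Rightarrow> int \<Rightarrow> 'a" where
  "betaw \<omega> s = (if s = 0 then 1 else 0) - \<omega> s"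

definition betat :: "(int \<Rightarrow> 'a::field) \<Rightarrow> int \<Rightarrow> 'a" where
  "betat \<omega> s = - betaw \<omega> (s + 1)"

definition Amat :: "(int \<Rightarrow> 'a::field) \<Rightarrow> nat \<Rightarrow> nat \<Rightarrow> 'a" where
  "Amat \<omega> i j = \<omega> (int j - int i)"

text \<open>Entries of 1 - A_k (the index set {0..k} determines k).\<close>
definition IAmat :: "(int \<Rightarrow> 'a::field) \<Rightarrow> nat \<Rightarrow> nat \<Rightarrow> 'a" where
  "IAmat \<omega> i j = (if i = j then 1 else 0) - Amat \<omega> i j"

definition Fdet :: "(int \<Rightarrow> 'a::field) \<Rightarrow> nat \<Rightarrow> 'a" where
  "Fdet \<omega> k = (if k = 0 then 1 else det_on {0..k-1} (IAmat \<omega>))"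

text \<open>F_(k,l): (-1)^l times the determinant of 1 - A_k with row l and column 0 deleted
  (remaining rows/columns renumbered 0..k-1 in increasing order).\<close>
definition Fcof :: "(int \<Rightarrow> 'a::field) \<Rightarrow> nat \<Rightarrow> nat \<Rightarrow> 'a" where
  "Fcof \<omega> k l = (-1) ^ l *
     det_on {0..<k} (\<lambda>i j. IAmat \<omega> (if i < l then i else Suc i) (Suc j))"

definition Gseq :: "(int \<Rightarrow> 'a::field) \<Rightarrow> nat \<Rightarrow> 'a" where
  "Gseq \<omega> k = (\<Sum>l = 0..k. Fcof \<omega> k l)"

definition eps :: "int \<Rightarrow> int set \<Rightarrow> 'a::comm_ring_1" where
  "eps s I = (-1) ^ card {i\<in>I. i < s}"

definition shift1 :: "int set \<Rightarrow> int set" where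
  "shift1 J = (\<lambda>x. x + 1) ` J"

text \<open>The matrix T (a = max S), indexed by a-subsets of [-b, a-1].\<close>
definition Tmat :: "(int \<Rightarrow> 'a::field) \<Rightarrow> int \<Rightarrow> int set \<Rightarrow> int set \<Rightarrow> 'a" where
  "Tmat \<omega> a I J =
     (if \<exists>s. I \<union> {a} = shift1 J \<union> {s}
      then (let s = (THE s. I \<union> {a} = shift1 J \<union> {s}) in eps s I * betaw \<omega> s)
      else 0)"

definition Ttmat :: "(int \<Rightarrow> 'a::field) \<Rightarrow> int \<Rightarrow> int set \<Rightarrow> int set \<Rightarrow> 'a" where
  "Ttmat \<omega> a I J =
     (if \<exists>s. I \<union> {a - 1} = shift1 J \<union> {s}
      then (let s = (THE s. I \<union> {a - 1} = shift1 J \<union> {s}) in eps s I * betat \<omega> s)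
      else 0)"

definition Umat :: "int \<Rightarrow> int set \<Rightarrow> int set \<Rightarrow> 'a::comm_ring_1" where
  "Umat a I J = (if I \<union> {a - 1} = J then 1 else 0)"

definition idxT :: "int \<Rightarrow> int \<Rightarrow> int set set" where
  "idxT a b = {I. I \<subseteq> {-b..a-1} \<and> card I = nat a}"

definition idxTt :: "int \<Rightarrow> int \<Rightarrow> int set set" where
  "idxTt a b = {I. I \<subseteq> {-b-1..a-2} \<and> card I = nat (a - 1)}"

definition zTmat :: "(int \<Rightarrow> 'a::field) \<Rightarrow> int \<Rightarrow> int set \<Rightarrow> int set \<Rightarrow> 'a poly" where
  "zTmat \<omega> a I J = (if I = J then 1 else 0) - [:0, Tmat \<omega> a I J:]"

definition zTtmat :: "(int \<Rightarrow> 'a::field) \<Rightarrow> int \<Rightarrow> int set \<Rightarrow> int set \<Rightarrow> 'a poly" where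
  "zTtmat \<omega> a I J = (if I = J then 1 else 0) - [:0, Ttmat \<omega> a I J:]"

definition Dpoly :: "(int \<Rightarrow> 'a::field) \<Rightarrow> int \<Rightarrow> int \<Rightarrow> 'a poly" where
  "Dpoly \<omega> a b = det_on (idxT a b) (zTmat \<omega> a)"

definition Dtpoly :: "(int \<Rightarrow> 'a::field) \<Rightarrow> int \<Rightarrow> int \<Rightarrow> 'a poly" where
  "Dtpoly \<omega> a b = det_on (idxTt a b) (zTtmat \<omega> a)"

definition Nt1poly :: "(int \<Rightarrow> 'a::field) \<Rightarrow> int \<Rightarrow> int \<Rightarrow> 'a poly" where
  "Nt1poly \<omega> a b =
     (\<Sum>K\<in>idxTt a b. \<Sum>L\<in>idxT a b.
        adj_on (idxTt a b) (zTtmat \<omega> a) {0..a-2} K * Umat a K L *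
        adj_on (idxT a b) (zTmat \<omega> a) L {0..a-1})"

end

theory Submission
  imports Defs "Jordan_Normal_Form.Determinant"
begin

text \<open>Deleting row \<open>l\<close> and column \<open>0\<close> of \<open>1 - A_k\<close> leaves a banded matrix: \<open>l\<close> rows of
  shifted \<open>\<beta>\<close>-tilde weights followed by \<open>k - l\<close> rows of shifted \<open>\<beta>\<close> weights. Expanding it row
  by row, the columns still available to the band form a window of \<open>a - 1\<close> (later \<open>a\<close>)
  elements, each row acts on that window by the transfer matrix \<open>T\<close>-tilde (later \<open>T\<close>), and
  the switch between the two bands is \<open>U\<close>. Hence \<open>F_{k,l} = (T~^l U T^{k-l})[I0~, I0]\<close>,
  and summing over \<open>l\<close> and \<open>k\<close> turns the generating function of \<open>G_k\<close> into a product of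
  Neumann series \<open>adj(1 - zT) / det(1 - zT)\<close>. The denominator has degree equal to the number
  of windows, \<open>C(a+b, a-1) + C(a+b, a) = C(a+b+1, a)\<close>, because \<open>det T \<noteq> 0\<close>: when the
  weights do not vanish at either end of their support, exactly one permutation of the windows
  has nonzero weight. The row sums of \<open>(1 - A_k)\<inverse>\<close> are Cramer's rule.\<close>

section \<open>Determinants and adjugates on finite index sets\<close>

lemma det_on_cong:
  assumes "\<And>i j. i \<in> A \<Longrightarrow> j \<in> A \<Longrightarrow> M i j = N i j"
  shows "det_on A M = det_on A N"
  unfolding det_on_def
  by (intro sum.cong refl arg_cong2[where f = "(*)"] prod.cong) (auto simp: permutes_in_image assms)

lemma det_on_reindex:
  fixes M :: "'j \<Rightarrow> 'j \<Rightarrow> 'r::comm_ring_1"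
  assumes f: "bij_betw f A B" and fin: "finite A"
  shows "det_on B M = det_on A (\<lambda>i j. M (f i) (f j))"
proof -
  define g where "g = inv_into A f"
  have g: "bij_betw g B A" unfolding g_def using f by (rule bij_betw_inv_into)
  have gf: "\<And>x. x \<in> A \<Longrightarrow> g (f x) = x" and fg: "\<And>y. y \<in> B \<Longrightarrow> f (g y) = y"
    unfolding g_def using f by (simp_all add: bij_betw_inv_into_left bij_betw_inv_into_right)
  have inj: "inj_on f A" using f by (auto simp: bij_betw_def)
  have term_eq: "of_int (sign (map_permutation A f p)) * (\<Prod>y\<in>B. M y (map_permutation A f p y)) =
      of_int (sign p) * (\<Prod>i\<in>A. M (f i) (f (p i)))" if p: "p permutes A" for p
  proof -
    have "(\<Prod>y\<in>B. M y (map_permutation A f p y)) = (\<Prod>x\<in>A. M (f x) (map_permutation A f p (f x)))"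
      by (rule prod.reindex_bij_betw[OF f, symmetric])
    also have "\<dots> = (\<Prod>x\<in>A. M (f x) (f (p x)))"
      by (rule prod.cong) (auto simp: map_permutation_apply[OF inj])
    finally show ?thesis using sign_map_permutation[OF inj p fin] by simp
  qed
  have "(\<Sum>p\<in>{p. p permutes A}. of_int (sign p) * (\<Prod>i\<in>A. M (f i) (f (p i))))
      = (\<Sum>q\<in>{q. q permutes B}. of_int (sign q) * (\<Prod>y\<in>B. M y (q y)))"
  proof (rule sum.reindex_bij_witness[where i = "map_permutation B g" and j = "map_permutation A f"])
    show "map_permutation B g (map_permutation A f p) = p" if "p \<in> {p. p permutes A}" for p
      by (rule map_permutation_compose_inv[OF f]) (use that gf in auto)
    show "map_permutation A f (map_permutation B g q) = q" if "q \<in> {q. q permutes B}" for q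
      by (rule map_permutation_compose_inv[OF g]) (use that fg in auto)
  qed (use map_permutation_permutes[OF f] map_permutation_permutes[OF g] term_eq in auto)
  thus ?thesis unfolding det_on_def by simp
qed

lemma det_on_atLeastLessThan: "det_on {0..<n} M = det (mat n n (\<lambda>(i,j). M i j))"
  unfolding det_on_def det_def
  by (auto intro!: sum.cong prod.cong simp: permutes_in_image atLeast0LessThan)

lemma adj_on_atLeastLessThan:
  assumes "i < n" "j < n"
  shows "adj_on {0..<n} M i j = cofactor (mat n n (\<lambda>(i,j). M i j)) j i"
proof -
  define A where "A = mat n n (\<lambda>(i,j). M i j)"
  define B where "B = mat n n (\<lambda>(r,c). if r = j then (if c = i then 1 else 0) else M r c)"
  have "adj_on {0..<n} M i j = det B" unfolding adj_on_def det_on_atLeastLessThan B_def ..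
  also have "\<dots> = (\<Sum>c<n. B $$ (j,c) * cofactor B j c)"
    by (rule laplace_expansion_row) (use assms in \<open>auto simp: B_def\<close>)
  also have "\<dots> = (\<Sum>c<n. if c = i then cofactor B j c else 0)"
    by (rule sum.cong) (use assms in \<open>auto simp: B_def\<close>)
  also have "\<dots> = cofactor B j i" using assms by simp
  also have "mat_delete B j i = mat_delete A j i"
    by (rule eq_matI) (auto simp: mat_delete_def A_def B_def)
  hence "cofactor B j i = cofactor A j i" unfolding cofactor_def by simp
  finally show ?thesis unfolding A_def .
qed

lemma adj_on_reindex:
  fixes M :: "'j \<Rightarrow> 'j \<Rightarrow> 'r::comm_ring_1"
  assumes f: "bij_betw f A B" and fin: "finite A" and "i \<in> A" "j \<in> A"
  shows "adj_on B M (f i) (f j) = adj_on A (\<lambda>i j. M (f i) (f j)) i j"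
proof -
  have "inj_on f A" using f by (auto simp: bij_betw_def)
  thus ?thesis unfolding adj_on_def
    by (subst det_on_reindex[OF f fin]) (rule det_on_cong, use assms in \<open>auto simp: inj_on_eq_iff\<close>)
qed

lemma det_adj_on_as_mat:
  fixes M :: "'j \<Rightarrow> 'j \<Rightarrow> 'r::comm_ring_1"
  assumes f: "bij_betw f {0..<n} I"
  defines "A \<equiv> mat n n (\<lambda>(r,c). M (f r) (f c))"
  shows "det_on I M = det A"
    and "r < n \<Longrightarrow> c < n \<Longrightarrow> adj_on I M (f r) (f c) = adj_mat A $$ (r, c)"
proof -
  show "det_on I M = det A"
    unfolding A_def det_on_atLeastLessThan[symmetric] by (rule det_on_reindex[OF f]) simp
  assume "r < n" "c < n"
  thus "adj_on I M (f r) (f c) = adj_mat A $$ (r, c)"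
    using adj_on_reindex[OF f, of r c M] adj_on_atLeastLessThan[of r n c]
    by (simp add: A_def adj_mat_def)
qed

lemma
  fixes M :: "'j \<Rightarrow> 'j \<Rightarrow> 'r::comm_ring_1"
  assumes fin: "finite I" and i: "i \<in> I" and j: "j \<in> I"
  shows sum_mult_adj_on: "(\<Sum>k\<in>I. M i k * adj_on I M k j) = (if i = j then det_on I M else 0)"
    and sum_adj_on_mult: "(\<Sum>k\<in>I. adj_on I M i k * M k j) = (if i = j then det_on I M else 0)"
proof -
  define n where "n = card I"
  obtain f where f: "bij_betw f {0..<n} I"
    using ex_bij_betw_nat_finite[OF fin] n_def atLeast0LessThan by metis
  define A where "A = mat n n (\<lambda>(r,c). M (f r) (f c))"
  have A: "A \<in> carrier_mat n n" unfolding A_def by simp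
  note as_mat = det_adj_on_as_mat[OF f, where M = M, folded A_def]
  have "I = f ` {0..<n}" using f by (simp add: bij_betw_def)
  then obtain r c where rc: "r < n" "c < n" "i = f r" "j = f c"
    using i j by auto
  have inj: "f r = f c \<longleftrightarrow> r = c"
    using f rc(1,2) by (auto simp: bij_betw_def dest: inj_onD)
  have entry: "A $$ (p, q) = M (f p) (f q)" if "p < n" "q < n" for p q
    using that by (simp add: A_def)
  have reindex: "(\<Sum>k\<in>I. h k) = (\<Sum>k<n. h (f k))" for h :: "'j \<Rightarrow> 'r"
    using sum.reindex_bij_betw[OF f, of h] by (simp add: atLeast0LessThan)
  have "(\<Sum>k\<in>I. M i k * adj_on I M k j) = (\<Sum>k<n. A $$ (r, k) * adj_mat A $$ (k, c))"
    unfolding reindex rc(3,4) by (intro sum.cong refl) (simp add: rc(1,2) entry as_mat(2))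
  also have "\<dots> = (A * adj_mat A) $$ (r, c)"
    using rc(1,2) A adj_mat(1)[OF A] by (simp add: scalar_prod_def atLeast0LessThan)
  finally show "(\<Sum>k\<in>I. M i k * adj_on I M k j) = (if i = j then det_on I M else 0)"
    using adj_mat(2)[OF A] rc inj as_mat(1) by simp
  have "(\<Sum>k\<in>I. adj_on I M i k * M k j) = (\<Sum>k<n. adj_mat A $$ (r, k) * A $$ (k, c))"
    unfolding reindex rc(3,4) by (intro sum.cong refl) (simp add: rc(1,2) entry as_mat(2))
  also have "\<dots> = (adj_mat A * A) $$ (r, c)"
    using rc(1,2) A adj_mat(1)[OF A] by (simp add: scalar_prod_def atLeast0LessThan)
  finally show "(\<Sum>k\<in>I. adj_on I M i k * M k j) = (if i = j then det_on I M else 0)"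
    using adj_mat(3)[OF A] rc inj as_mat(1) by simp
qed

lemma det_on_one:
  assumes "finite I"
  shows "det_on I (\<lambda>i j. if i = j then (1::'r::comm_ring_1) else 0) = 1"
proof -
  obtain f where f: "bij_betw f {0..<card I} I"
    using ex_bij_betw_nat_finite[OF assms] atLeast0LessThan by metis
  have "det_on I (\<lambda>i j. if i = j then (1::'r) else 0) =
      det (mat (card I) (card I) (\<lambda>(r, c). if f r = f c then 1 else 0))"
    by (rule det_adj_on_as_mat(1)[OF f])
  also have "mat (card I) (card I) (\<lambda>(r, c). if f r = f c then (1::'r) else 0) = 1\<^sub>m (card I)"
    using f by (intro eq_matI) (auto simp: bij_betw_def inj_on_eq_iff)
  finally show ?thesis by simp
qed

lemma inv_on_eq_adj_on:
  fixes M :: "'i \<Rightarrow> 'i \<Rightarrow> 'a::field"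
  assumes fin: "finite I" and d: "det_on I M \<noteq> 0" and "i \<in> I" "j \<in> I"
  shows "inv_on I M i j = adj_on I M i j / det_on I M"
proof -
  define B0 where "B0 = (\<lambda>i j. adj_on I M i j / det_on I M)"
  have right: "(\<Sum>m\<in>I. M i m * B0 m j) = (if i = j then 1 else 0)" if "i \<in> I" "j \<in> I" for i j
    using sum_mult_adj_on[OF fin that, of M] d by (simp add: B0_def sum_divide_distrib[symmetric])
  have left: "(\<Sum>m\<in>I. B0 i m * M m j) = (if i = j then 1 else 0)" if "i \<in> I" "j \<in> I" for i j
    using sum_adj_on_mult[OF fin that, of M] d by (simp add: B0_def sum_divide_distrib[symmetric])
  define B where "B = inv_on I M"
  have B: "\<forall>i\<in>I. \<forall>j\<in>I. (\<Sum>m\<in>I. B i m * M m j) = (if i = j then 1 else 0)"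
    unfolding B_def inv_on_def by (rule someI2[of _ B0]) (use right left in auto)
  have "B i j = (\<Sum>m\<in>I. B i m * (if m = j then 1 else 0))"
    using fin assms(4) by (simp add: if_distrib[of "\<lambda>x. _ * x"] sum.delta' cong: if_cong)
  also have "\<dots> = (\<Sum>m\<in>I. B i m * (\<Sum>n\<in>I. M m n * B0 n j))"
    by (rule sum.cong[OF refl]) (simp add: right assms(4))
  also have "\<dots> = (\<Sum>m\<in>I. \<Sum>n\<in>I. B i m * M m n * B0 n j)"
    by (simp add: sum_distrib_left mult.assoc)
  also have "\<dots> = (\<Sum>n\<in>I. (\<Sum>m\<in>I. B i m * M m n) * B0 n j)"
    by (subst sum.swap) (simp add: sum_distrib_right)
  also have "\<dots> = (\<Sum>n\<in>I. (if i = n then 1 else 0) * B0 n j)"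
    by (rule sum.cong[OF refl]) (use B assms(3) in simp)
  also have "\<dots> = B0 i j"
    using fin assms(3) by (simp add: if_distrib[of "\<lambda>x. x * _"] sum.delta cong: if_cong)
  finally show ?thesis unfolding B_def B0_def .
qed
section \<open>Determinants of row lists on column sets\<close>

text \<open>\<open>rows_det fs C\<close> is the determinant of the rows \<open>fs\<close> restricted to the columns \<open>C\<close>,
  taken in increasing order; it vanishes unless \<open>card C = length fs\<close>.\<close>

fun rows_det :: "('c::linorder \<Rightarrow> 'r::comm_ring_1) list \<Rightarrow> 'c set \<Rightarrow> 'r" where
  "rows_det [] C = (if C = {} then 1 else 0)"
| "rows_det (f # fs) C = (\<Sum>c\<in>C. (-1) ^ card {x\<in>C. x < c} * f c * rows_det fs (C - {c}))"

lemma rows_det_card_neq: "finite C \<Longrightarrow> card C \<noteq> length fs \<Longrightarrow> rows_det fs C = 0"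
proof (induction fs arbitrary: C)
  case (Cons f fs)
  have "rows_det fs (C - {c}) = 0" if "c \<in> C" for c
  proof -
    have "card C > 0" using that Cons.prems(1) card_gt_0_iff by blast
    thus ?thesis using Cons.prems that by (intro Cons.IH) (auto simp: card_Diff_singleton)
  qed
  thus ?case by simp
qed simp

lemma rows_det_zero_column:
  "finite C \<Longrightarrow> c \<in> C \<Longrightarrow> \<forall>g\<in>set fs. g c = 0 \<Longrightarrow> rows_det fs C = 0"
proof (induction fs arbitrary: C)
  case (Cons f fs)
  have "f c' * rows_det fs (C - {c'}) = 0" if "c' \<in> C" for c'
    using Cons.prems that by (cases "c' = c") (simp_all add: Cons.IH)
  thus ?case by (simp add: mult.assoc)
qed auto

lemma rows_det_zero_row:
  "finite C \<Longrightarrow> g \<in> set fs \<Longrightarrow> \<forall>x\<in>C. g x = 0 \<Longrightarrow> rows_det fs C = 0"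
proof (induction fs arbitrary: C)
  case (Cons f fs)
  show ?case
  proof (cases "g = f")
    case False
    hence "rows_det fs (C - {c}) = 0" if "c \<in> C" for c
      using Cons.prems that by (intro Cons.IH) auto
    thus ?thesis by simp
  qed (use Cons.prems in simp)
qed simp

lemma rows_det_uminus_rows:
  "rows_det (map (\<lambda>i c. - g i c) xs @ rest) C = (-1) ^ length xs * rows_det (map g xs @ rest) C"
  by (induction xs arbitrary: C) (simp_all add: sum_distrib_left mult_ac)

lemma rows_det_strict_mono_image:
  assumes "strict_mono_on C h" "finite C"
  shows "rows_det fs (h ` C) = rows_det (map (\<lambda>f. f \<circ> h) fs) C"
  using assms
proof (induction fs arbitrary: C)
  case (Cons f fs)
  have inj: "inj_on h C" using Cons.prems strict_mono_on_imp_inj_on by blast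
  have less: "\<And>x y. x \<in> C \<Longrightarrow> y \<in> C \<Longrightarrow> h x < h y \<longleftrightarrow> x < y"
    using Cons.prems(1) strict_mono_on_less by blast
  have "rows_det (f # fs) (h ` C) =
      (\<Sum>c\<in>C. (-1) ^ card {x\<in>h ` C. x < h c} * f (h c) * rows_det fs (h ` C - {h c}))"
    by (simp add: sum.reindex[OF inj])
  also have "\<dots> = (\<Sum>c\<in>C. (-1) ^ card {x\<in>C. x < c} * (f \<circ> h) c *
      rows_det (map (\<lambda>f. f \<circ> h) fs) (C - {c}))"
  proof (rule sum.cong[OF refl])
    fix c assume c: "c \<in> C"
    have "{x\<in>h ` C. x < h c} = h ` {x\<in>C. x < c}" using less c by auto
    hence "card {x\<in>h ` C. x < h c} = card {x\<in>C. x < c}"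
      using inj_on_subset[OF inj] by (simp add: card_image)
    moreover have "h ` C - {h c} = h ` (C - {c})" using inj c by (auto simp: inj_on_def)
    moreover have "rows_det fs (h ` (C - {c})) = rows_det (map (\<lambda>f. f \<circ> h) fs) (C - {c})"
      using Cons.prems by (intro Cons.IH) (auto intro: monotone_on_subset)
    ultimately show "(-1) ^ card {x\<in>h ` C. x < h c} * f (h c) * rows_det fs (h ` C - {h c}) =
        (-1) ^ card {x\<in>C. x < c} * (f \<circ> h) c * rows_det (map (\<lambda>f. f \<circ> h) fs) (C - {c})"
      by simp
  qed
  finally show ?case by (simp only: list.map rows_det.simps)
qed simp

lemma image_skip_atLeastLessThan:
  assumes "c < Suc m"
  shows "(\<lambda>j. if j < c then j else Suc j) ` {0..<m} = {0..<Suc m} - {c}"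
proof
  show "{0..<Suc m} - {c} \<subseteq> (\<lambda>j. if j < c then j else Suc j) ` {0..<m}"
  proof
    fix x assume x: "x \<in> {0..<Suc m} - {c}"
    show "x \<in> (\<lambda>j. if j < c then j else Suc j) ` {0..<m}"
    proof (cases "x < c")
      case True thus ?thesis using x assms by (intro image_eqI[of _ _ x]) auto
    next
      case False thus ?thesis using x by (intro image_eqI[of _ _ "x - 1"]) auto
    qed
  qed
qed auto

lemma rows_det_atLeastLessThan:
  "length fs = m \<Longrightarrow> rows_det fs {0..<m} = det (mat m m (\<lambda>(i,j). (fs ! i) j))"
proof (induction m arbitrary: fs)
  case 0 thus ?case by (simp add: det_def)
next
  case (Suc m)
  then obtain f gs where fs: "fs = f # gs" and gs: "length gs = m" by (cases fs) auto
  define A where "A = mat (Suc m) (Suc m) (\<lambda>(i,j). (fs ! i) j)"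
  define skip where "skip = (\<lambda>c j::nat. if j < c then j else Suc j)"
  have minor: "rows_det gs ({0..<Suc m} - {c}) = det (mat_delete A 0 c)" if c: "c < Suc m" for c
  proof -
    have mono: "strict_mono_on {0..<m} (skip c)" unfolding skip_def by (auto simp: strict_mono_on_def)
    have "skip c ` {0..<m} = {0..<Suc m} - {c}"
      unfolding skip_def by (rule image_skip_atLeastLessThan[OF c])
    hence "rows_det gs ({0..<Suc m} - {c}) = rows_det (map (\<lambda>f. f \<circ> skip c) gs) {0..<m}"
      using rows_det_strict_mono_image[OF mono, of gs] by simp
    also have "\<dots> = det (mat m m (\<lambda>(i,j). (map (\<lambda>f. f \<circ> skip c) gs ! i) j))"
      by (rule Suc.IH) (simp add: gs)
    also have "mat m m (\<lambda>(i,j). (map (\<lambda>f. f \<circ> skip c) gs ! i) j) = mat_delete A 0 c"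
      by (rule eq_matI) (auto simp: mat_delete_def A_def fs skip_def gs)
    finally show ?thesis .
  qed
  have "rows_det fs {0..<Suc m} = (\<Sum>c<Suc m. (-1) ^ c * f c * rows_det gs ({0..<Suc m} - {c}))"
  proof -
    have "{x\<in>{0..<Suc m}. x < c} = {0..<c}" if "c < Suc m" for c using that by auto
    thus ?thesis unfolding fs rows_det.simps by (intro sum.cong) auto
  qed
  also have "\<dots> = (\<Sum>c<Suc m. A $$ (0,c) * cofactor A 0 c)"
    by (intro sum.cong refl) (simp add: minor cofactor_def A_def fs)
  also have "\<dots> = det A" by (rule laplace_expansion_row[symmetric]) (simp_all add: A_def)
  finally show ?case unfolding A_def .
qed

lemma det_on_eq_rows_det: "det_on {0..<k} N = rows_det (map N [0..<k]) {0..<k}"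
  by (subst rows_det_atLeastLessThan) (auto simp: det_on_atLeastLessThan intro!: arg_cong[where f = det])

definition unit_rows :: "nat \<Rightarrow> int \<Rightarrow> (int \<Rightarrow> 'r::comm_ring_1) list" where
  "unit_rows m q = map (\<lambda>j c. if c = q + int j then 1 else 0) [0..<m]"

lemma unit_rows_Suc: "unit_rows (Suc m) q = (\<lambda>c. if c = q then 1 else 0) # unit_rows m (q + 1)"
  unfolding unit_rows_def
  by (simp add: upt_conv_Cons map_Suc_upt[symmetric] del: upt_Suc) (simp add: o_def add_ac)

lemma unit_row_in_unit_rows:
  "0 \<le> c - q \<Longrightarrow> c - q < int m \<Longrightarrow> (\<lambda>x. if x = c then 1 else 0) \<in> set (unit_rows m q)"
  unfolding unit_rows_def by (auto intro!: image_eqI[of _ _ "nat (c - q)"])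

lemma rows_det_unit_rows: "rows_det (unit_rows m q) {q..<q + int m} = (1::'r::comm_ring_1)"
proof (induction m arbitrary: q)
  case 0 thus ?case by (simp add: unit_rows_def)
next
  case (Suc m)
  let ?Q = "{q..<q + int (Suc m)}"
  have "rows_det (unit_rows (Suc m) q) ?Q =
      (\<Sum>c\<in>?Q. if c = q then (-1) ^ card {x\<in>?Q. x < c} * rows_det (unit_rows m (q+1)) (?Q - {c})
        else (0::'r))"
    unfolding unit_rows_Suc rows_det.simps by (intro sum.cong) auto
  also have "\<dots> = (-1) ^ card {x\<in>?Q. x < q} * rows_det (unit_rows m (q+1)) (?Q - {q})"
    by (subst sum.delta) auto
  also have "{x\<in>?Q. x < q} = {}" by auto
  also have "?Q - {q} = {q+1..<(q+1) + int m}" by auto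
  finally show ?case using Suc.IH[of "q+1"] by (simp only: card.empty power_0 mult_1)
qed

lemma rows_det_append_unit_rows:
  assumes "finite C" "\<forall>x\<in>C. x < q"
  shows "rows_det (fs @ unit_rows m q) (C \<union> {q..<q + int m}) = rows_det fs C"
  using assms
proof (induction fs arbitrary: C)
  case Nil
  show ?case
  proof (cases "C = {}")
    case False
    have "card (C \<union> {q..<q + int m}) = card C + m"
      using Nil.prems by (subst card_Un_disjoint) auto
    moreover have "card C > 0" using False Nil.prems card_gt_0_iff by blast
    ultimately have "rows_det (unit_rows m q) (C \<union> {q..<q + int m}) = (0::'a)"
      using Nil.prems by (intro rows_det_card_neq) (auto simp: unit_rows_def)
    thus ?thesis using False by simp
  qed (simp add: rows_det_unit_rows)
next
  case (Cons f fs)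
  let ?Q = "{q..<q + int m}"
  have unit_column: "rows_det (fs @ unit_rows m q) (C \<union> ?Q - {c}) = (0::'a)" if c: "c \<in> ?Q" for c
    by (rule rows_det_zero_row[where g = "\<lambda>x. if x = c then 1 else 0"])
       (use Cons.prems c unit_row_in_unit_rows[of c q m] in auto)
  have old_column: "(-1) ^ card {x\<in>C \<union> ?Q. x < c} * f c * rows_det (fs @ unit_rows m q) (C \<union> ?Q - {c})
      = (-1) ^ card {x\<in>C. x < c} * f c * rows_det fs (C - {c})" if c: "c \<in> C" for c
  proof -
    have "{x\<in>C \<union> ?Q. x < c} = {x\<in>C. x < c}" using Cons.prems c by force
    moreover have "C \<union> ?Q - {c} = (C - {c}) \<union> ?Q" using Cons.prems c by force
    moreover have "rows_det (fs @ unit_rows m q) ((C - {c}) \<union> ?Q) = rows_det fs (C - {c})"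
      using Cons.prems by (intro Cons.IH) auto
    ultimately show ?thesis by simp
  qed
  have "C \<inter> ?Q = {}" using Cons.prems by auto
  thus ?case using Cons.prems unit_column old_column by (simp add: sum.union_disjoint)
qed
section \<open>The transfer matrix on windows\<close>

text \<open>With \<open>lo = -b\<close> and \<open>t = a\<close> (resp. \<open>lo = -b-1\<close>, \<open>t = a-1\<close>) the windows are the
  index sets of \<open>T\<close> (resp. \<open>T\<close>-tilde); removing \<open>s\<close> from \<open>I \<union> {t}\<close> and shifting
  down by one is the only way to reach a \<open>J\<close> with \<open>I \<union> {t} = (J + 1) \<union> {s}\<close>.\<close>

definition windows :: "int \<Rightarrow> int \<Rightarrow> int set set" where
  "windows lo t = {I. I \<subseteq> {lo..t-1} \<and> card I = nat t}"

definition transfer_mat :: "(int \<Rightarrow> 'a::comm_ring_1) \<Rightarrow> int \<Rightarrow> int set \<Rightarrow> int set \<Rightarrow> 'a" where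
  "transfer_mat \<beta> t I J =
     (if \<exists>s. I \<union> {t} = shift1 J \<union> {s}
      then (let s = (THE s. I \<union> {t} = shift1 J \<union> {s}) in eps s I * \<beta> s)
      else 0)"

definition window_step :: "int \<Rightarrow> int set \<Rightarrow> int \<Rightarrow> int set" where
  "window_step t I s = (\<lambda>x. x - 1) ` (insert t I - {s})"

fun mat_pow_on :: "'i set \<Rightarrow> ('i \<Rightarrow> 'i \<Rightarrow> 'a::comm_ring_1) \<Rightarrow> nat \<Rightarrow> 'i \<Rightarrow> 'i \<Rightarrow> 'a" where
  "mat_pow_on X M 0 = (\<lambda>I J. if I = J then 1 else 0)"
| "mat_pow_on X M (Suc n) = (\<lambda>I J. \<Sum>K\<in>X. M I K * mat_pow_on X M n K J)"

lemma finite_windows: "finite (windows lo t)"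
  by (rule finite_subset[of _ "Pow {lo..t-1}"]) (auto simp: windows_def)

lemma windows_finite: "I \<in> windows lo t \<Longrightarrow> finite I"
  unfolding windows_def by (auto intro: finite_subset)

lemma windows_top_notin: "I \<in> windows lo t \<Longrightarrow> t \<notin> I"
  unfolding windows_def by auto

lemma card_shift1: "card (shift1 K) = card K"
  unfolding shift1_def by (rule card_image) (auto simp: inj_on_def)

lemma shift1_window_step: "shift1 (window_step t I s) = insert t I - {s}"
  unfolding shift1_def window_step_def by (auto simp: image_image)

lemma window_step_eq_iff: "window_step t I s = K \<longleftrightarrow> insert t I - {s} = shift1 K"
proof
  assume "insert t I - {s} = shift1 K"
  thus "window_step t I s = K" unfolding window_step_def shift1_def by (auto simp: image_image)
qed (use shift1_window_step in metis)

lemma window_step_inj: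
  assumes "s1 \<in> insert t I" "s2 \<in> insert t I" "window_step t I s1 = window_step t I s2"
  shows "s1 = s2"
proof -
  have "insert t I - {s1} = insert t I - {s2}" using assms(3) shift1_window_step by metis
  thus ?thesis using assms(1,2) by blast
qed

lemma card_window_step:
  assumes I: "I \<in> windows lo t" and s: "s \<in> insert t I"
  shows "card (window_step t I s) = nat t"
proof -
  have "card (window_step t I s) = card (insert t I - {s})"
    unfolding window_step_def by (rule card_image) (auto simp: inj_on_def)
  also have "\<dots> = card I"
    using s windows_finite[OF I] windows_top_notin[OF I] by (simp add: card_Diff_singleton)
  finally show ?thesis using I by (simp add: windows_def)
qed

lemma insert_top_windows:
  assumes "K \<in> windows (lo - 1) (t - 1)" "lo - 1 \<notin> K" "lo < t" "0 < t"
  shows "insert (t - 1) K \<in> windows lo t"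
proof -
  have K: "K \<subseteq> {lo - 1..t - 2}" "card K = nat (t - 1)" "finite K"
    using assms(1) windows_finite[OF assms(1)] by (auto simp: windows_def)
  have "K \<subseteq> {lo..t - 2}"
  proof
    fix x assume "x \<in> K"
    hence "lo - 1 \<le> x" "x \<le> t - 2" "x \<noteq> lo - 1" using K(1) assms(2) by auto
    thus "x \<in> {lo..t - 2}" by simp
  qed
  moreover from this have "t - 1 \<notin> K" by auto
  hence "card (insert (t - 1) K) = Suc (nat (t - 1))" using K by simp
  moreover have "Suc (nat (t - 1)) = nat t" using assms(4) by simp
  ultimately show ?thesis using assms(3) by (auto simp: windows_def)
qed

lemma transfer_eqn_iff:
  assumes I: "I \<in> windows lo t" and K: "K \<in> windows lo t"
  shows "I \<union> {t} = shift1 K \<union> {s} \<longleftrightarrow> s \<in> insert t I \<and> K = window_step t I s"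
proof
  assume e: "I \<union> {t} = shift1 K \<union> {s}"
  have card: "card (I \<union> {t}) = Suc (card K)"
    using I K windows_finite[OF I] windows_top_notin[OF I] by (simp add: windows_def)
  have "s \<notin> shift1 K"
  proof
    assume "s \<in> shift1 K"
    hence "card (I \<union> {t}) = card K" using e card_shift1 by (metis insert_absorb insert_is_Un sup_commute)
    thus False using card by simp
  qed
  hence "insert t I - {s} = shift1 K" using e by auto
  moreover have "s \<in> insert t I" using e by auto
  ultimately show "s \<in> insert t I \<and> K = window_step t I s" using window_step_eq_iff by metis
next
  assume "s \<in> insert t I \<and> K = window_step t I s"
  thus "I \<union> {t} = shift1 K \<union> {s}" using shift1_window_step[of t I s] by auto
qed

lemma transfer_mat_eq_sum:
  assumes I: "I \<in> windows lo t" and K: "K \<in> windows lo t"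
  shows "transfer_mat \<beta> t I K = (\<Sum>s\<in>insert t I. if K = window_step t I s then eps s I * \<beta> s else 0)"
proof (cases "\<exists>s0\<in>insert t I. K = window_step t I s0")
  case True
  then obtain s0 where s0: "s0 \<in> insert t I" "K = window_step t I s0" by blast
  have "(\<Sum>s\<in>insert t I. if K = window_step t I s then eps s I * \<beta> s else 0)
      = (\<Sum>s\<in>insert t I. if s = s0 then eps s I * \<beta> s else 0)"
    by (rule sum.cong[OF refl]) (use s0 window_step_inj[of _ t I s0] in auto)
  also have "\<dots> = eps s0 I * \<beta> s0" using s0 windows_finite[OF I] by (simp add: sum.delta)
  finally have sum: "(\<Sum>s\<in>insert t I. if K = window_step t I s then eps s I * \<beta> s else 0) = eps s0 I * \<beta> s0" .
  have "(THE s. I \<union> {t} = shift1 K \<union> {s}) = s0"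
  proof (rule the_equality)
    show "I \<union> {t} = shift1 K \<union> {s0}" using transfer_eqn_iff[OF I K] s0 by blast
  next
    fix s assume "I \<union> {t} = shift1 K \<union> {s}"
    hence "s \<in> insert t I" "K = window_step t I s" using transfer_eqn_iff[OF I K] by blast+
    thus "s = s0" using s0 window_step_inj by metis
  qed
  moreover have "\<exists>s. I \<union> {t} = shift1 K \<union> {s}" using transfer_eqn_iff[OF I K] s0 by blast
  ultimately show ?thesis unfolding transfer_mat_def using sum by simp
next
  case False
  hence "\<not> (\<exists>s. I \<union> {t} = shift1 K \<union> {s})" using transfer_eqn_iff[OF I K] by blast
  moreover have "(\<Sum>s\<in>insert t I. if K = window_step t I s then eps s I * \<beta> s else 0) = 0"
    using False by (intro sum.neutral) auto
  ultimately show ?thesis unfolding transfer_mat_def by simp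
qed

lemma transfer_mat_window_step:
  assumes I: "I \<in> windows lo t" and s0: "s0 \<in> insert t I"
    and K: "window_step t I s0 \<in> windows lo t"
  shows "transfer_mat \<beta> t I (window_step t I s0) = eps s0 I * \<beta> s0"
proof -
  have "transfer_mat \<beta> t I (window_step t I s0) =
      (\<Sum>s\<in>insert t I. if s = s0 then eps s I * \<beta> s else 0)"
    unfolding transfer_mat_eq_sum[OF I K]
    by (rule sum.cong[OF refl]) (use s0 window_step_inj[of _ t I s0] in auto)
  also have "\<dots> = eps s0 I * \<beta> s0" using s0 windows_finite[OF I] by (simp add: sum.delta)
  finally show ?thesis .
qed

lemma sum_transfer_mat:
  assumes I: "I \<in> windows lo t"
  shows "(\<Sum>K\<in>windows lo t. transfer_mat \<beta> t I K * g K) =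
    (\<Sum>s\<in>insert t I. if window_step t I s \<in> windows lo t
       then eps s I * \<beta> s * g (window_step t I s) else 0)"
proof -
  have "(\<Sum>K\<in>windows lo t. transfer_mat \<beta> t I K * g K) =
     (\<Sum>K\<in>windows lo t. \<Sum>s\<in>insert t I. if K = window_step t I s then eps s I * \<beta> s * g K else 0)"
    by (rule sum.cong[OF refl])
       (simp add: transfer_mat_eq_sum[OF I] sum_distrib_right, intro sum.cong refl, simp)
  also have "\<dots> = (\<Sum>s\<in>insert t I. \<Sum>K\<in>windows lo t.
      if K = window_step t I s then eps s I * \<beta> s * g K else 0)"
    by (rule sum.swap)
  also have "\<dots> = (\<Sum>s\<in>insert t I. if window_step t I s \<in> windows lo t
       then eps s I * \<beta> s * g (window_step t I s) else 0)"
    by (rule sum.cong[OF refl]) (simp add: sum.delta finite_windows)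
  finally show ?thesis .
qed
section \<open>Banded determinants as powers of the transfer matrix\<close>

definition shift_row :: "(int \<Rightarrow> 'a) \<Rightarrow> int \<Rightarrow> int \<Rightarrow> 'a" where
  "shift_row \<beta> r = (\<lambda>c. \<beta> (c - r))"

definition band_rows :: "(int \<Rightarrow> 'a) \<Rightarrow> int \<Rightarrow> nat \<Rightarrow> (int \<Rightarrow> 'a) list" where
  "band_rows \<beta> r n = map (\<lambda>i. shift_row \<beta> (r + int i)) [0..<n]"

lemma band_rows_Suc: "band_rows \<beta> r (Suc n) = shift_row \<beta> r # band_rows \<beta> (r + 1) n"
  unfolding band_rows_def
  by (simp add: upt_conv_Cons map_Suc_upt[symmetric] del: upt_Suc) (simp add: o_def add_ac)

lemma window_step_notin_windows:
  assumes I: "I \<in> windows lo t" and s: "s \<in> insert t I"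
    and J: "window_step t I s \<notin> windows lo t"
  shows "lo - 1 \<in> window_step t I s"
proof -
  have "\<not> window_step t I s \<subseteq> {lo..t-1}"
    using J card_window_step[OF I s] by (simp add: windows_def)
  moreover have "window_step t I s \<subseteq> {lo - 1..t-1}"
    using I s by (auto simp: windows_def window_step_def)
  ultimately obtain x where x: "x \<in> window_step t I s" "x \<notin> {lo..t-1}" "x \<in> {lo - 1..t-1}"
    by blast
  moreover from x(2,3) have "x = lo - 1" by auto
  ultimately show ?thesis by simp
qed

lemma window_columns_minus:
  assumes I: "I \<in> windows lo t" and s: "s \<in> insert t I" and Y: "\<forall>y\<in>Y. r + int (Suc n) + t \<le> y"
  shows "(\<lambda>x. x + r) ` I \<union> {r + t..<r + int (Suc n) + t} \<union> Y - {s + r} =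
    (\<lambda>x. x + (r + 1)) ` window_step t I s \<union> {(r + 1) + t..<(r + 1) + int n + t} \<union> Y"
proof -
  have tI: "t \<notin> I" and sle: "s \<le> t" using I s by (auto simp: windows_def)
  have "(\<lambda>x. x + (r + 1)) ` window_step t I s = (\<lambda>x. x + r) ` (insert t I - {s})"
    unfolding window_step_def by (auto simp: image_image)
  thus ?thesis using Y sle s tI
  proof (auto simp: image_iff)
    fix x assume "\<not> r + 1 + t \<le> x" "r + t \<le> x" "s \<in> I"
    hence "x = t + r" "t \<noteq> s" using tI by auto
    thus "\<exists>y\<in>insert t I - {s}. x = y + r" by blast
  qed
qed

lemma rows_det_shift_row_Cons:
  assumes \<beta>: "\<And>s. t < s \<Longrightarrow> \<beta> s = 0" and I: "I \<in> windows lo t"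
    and Y: "finite Y" "\<forall>y\<in>Y. r + int (Suc n) + t \<le> y"
  shows "rows_det (shift_row \<beta> r # L) ((\<lambda>x. x + r) ` I \<union> {r + t..<r + int (Suc n) + t} \<union> Y) =
    (\<Sum>s\<in>insert t I. eps s I * \<beta> s *
       rows_det L ((\<lambda>x. x + (r + 1)) ` window_step t I s \<union> {(r + 1) + t..<(r + 1) + int n + t} \<union> Y))"
    (is "rows_det _ ?C = _")
proof -
  have fin: "finite ?C" using windows_finite[OF I] Y(1) by simp
  have "rows_det (shift_row \<beta> r # L) ?C =
      (\<Sum>c\<in>(\<lambda>s. s + r) ` insert t I. (-1) ^ card {x\<in>?C. x < c} * \<beta> (c - r) * rows_det L (?C - {c}))"
  proof (simp only: rows_det.simps shift_row_def, rule sum.mono_neutral_right[OF fin])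
    show "\<forall>c\<in>?C - (\<lambda>s. s + r) ` insert t I. (-1) ^ card {x\<in>?C. x < c} * \<beta> (c - r) * rows_det L (?C - {c}) = 0"
      \<comment> \<open>columns beyond the window lie more than \<open>t\<close> to the right of row \<open>r\<close>\<close>
      using Y(2) \<beta> by (auto simp: image_iff)
  qed auto
  also have "\<dots> = (\<Sum>s\<in>insert t I. (-1) ^ card {x\<in>?C. x < s + r} * \<beta> s * rows_det L (?C - {s + r}))"
    by (subst sum.reindex) (auto simp: inj_on_def)
  also have "\<dots> = (\<Sum>s\<in>insert t I. eps s I * \<beta> s *
       rows_det L ((\<lambda>x. x + (r + 1)) ` window_step t I s \<union> {(r + 1) + t..<(r + 1) + int n + t} \<union> Y))"
  proof (rule sum.cong[OF refl])
    fix s assume s: "s \<in> insert t I"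
    have "s \<le> t" using s I by (auto simp: windows_def)
    hence "{x\<in>?C. x < s + r} = (\<lambda>x. x + r) ` {x\<in>I. x < s}" using Y(2) by (auto simp: image_iff)
    hence "(-1) ^ card {x\<in>?C. x < s + r} = (eps s I :: 'a)"
      unfolding eps_def by (simp add: card_image inj_on_def)
    thus "(-1) ^ card {x\<in>?C. x < s + r} * \<beta> s * rows_det L (?C - {s + r}) = eps s I * \<beta> s *
       rows_det L ((\<lambda>x. x + (r + 1)) ` window_step t I s \<union> {(r + 1) + t..<(r + 1) + int n + t} \<union> Y)"
      using window_columns_minus[OF I s Y(2)] by simp
  qed
  finally show ?thesis .
qed

lemma rows_det_band_rows_window_left:
  assumes \<beta>: "\<And>s. s < lo \<Longrightarrow> \<beta> s = 0" and I: "I \<in> windows lo t" and s: "s \<in> insert t I"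
    and out: "window_step t I s \<notin> windows lo t" and Y: "finite Y"
    and rest: "\<forall>f\<in>set rest. \<forall>c. c < r + int (Suc n) + lo \<longrightarrow> f c = 0"
  shows "rows_det (band_rows \<beta> (r + 1) n @ rest)
    ((\<lambda>x. x + (r + 1)) ` window_step t I s \<union> {(r + 1) + t..<(r + 1) + int n + t} \<union> Y) = 0"
proof (rule rows_det_zero_column)
  \<comment> \<open>the window has passed \<open>lo\<close>, so column \<open>r + lo\<close> is outside the band\<close>
  show "r + lo \<in> (\<lambda>x. x + (r + 1)) ` window_step t I s \<union> {(r + 1) + t..<(r + 1) + int n + t} \<union> Y"
    using window_step_notin_windows[OF I s out] by (intro UnI1 image_eqI[of _ _ "lo - 1"]) auto
  show "\<forall>g\<in>set (band_rows \<beta> (r + 1) n @ rest). g (r + lo) = 0"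
    using rest \<beta> by (auto simp: band_rows_def shift_row_def)
qed (use windows_finite[OF I] Y in \<open>simp add: window_step_def\<close>)

text \<open>Expanding along the first band row moves the window of columns within reach of the band
  one step to the right, weighted by the transfer matrix; after \<open>n\<close> rows this is its
  \<open>n\<close>-th power.\<close>

lemma rows_det_band_rows:
  fixes \<beta> :: "int \<Rightarrow> 'a::comm_ring_1"
  assumes \<beta>: "\<And>s. s < lo \<or> t < s \<Longrightarrow> \<beta> s = 0"
    and I: "I \<in> windows lo t" and Y: "finite Y" "\<forall>y\<in>Y. r + int n + t \<le> y"
    and rest: "\<forall>f\<in>set rest. \<forall>c. c < r + int n + lo \<longrightarrow> f c = 0"
  shows "rows_det (band_rows \<beta> r n @ rest) ((\<lambda>x. x + r) ` I \<union> {r + t..<r + int n + t} \<union> Y) =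
    (\<Sum>J\<in>windows lo t. mat_pow_on (windows lo t) (transfer_mat \<beta> t) n I J *
       rows_det rest ((\<lambda>x. x + (r + int n)) ` J \<union> Y))"
  using I Y rest
proof (induction n arbitrary: r I)
  case 0
  have "(\<Sum>J\<in>windows lo t. mat_pow_on (windows lo t) (transfer_mat \<beta> t) 0 I J *
      rows_det rest ((\<lambda>x. x + (r + int 0)) ` J \<union> Y)) =
      (\<Sum>J\<in>windows lo t. if I = J then rows_det rest ((\<lambda>x. x + r) ` J \<union> Y) else 0)"
    by (rule sum.cong) auto
  also have "\<dots> = rows_det rest ((\<lambda>x. x + r) ` I \<union> Y)" using 0 by (simp add: sum.delta finite_windows)
  finally show ?case by (simp add: band_rows_def)
next
  case (Suc n)
  let ?W = "windows lo t" and ?P = "mat_pow_on (windows lo t) (transfer_mat \<beta> t) n"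
  define X where "X = (\<lambda>J. rows_det rest ((\<lambda>x. x + (r + int (Suc n))) ` J \<union> Y))"
  let ?L = "band_rows \<beta> (r + 1) n @ rest"
  have "rows_det (band_rows \<beta> r (Suc n) @ rest) ((\<lambda>x. x + r) ` I \<union> {r + t..<r + int (Suc n) + t} \<union> Y) =
      (\<Sum>s\<in>insert t I. eps s I * \<beta> s * rows_det ?L
        ((\<lambda>x. x + (r + 1)) ` window_step t I s \<union> {(r + 1) + t..<(r + 1) + int n + t} \<union> Y))"
    unfolding band_rows_Suc append_Cons by (rule rows_det_shift_row_Cons) (use \<beta> Suc.prems in auto)
  also have "\<dots> = (\<Sum>s\<in>insert t I. if window_step t I s \<in> ?W
      then eps s I * \<beta> s * (\<Sum>J\<in>?W. ?P (window_step t I s) J * X J) else 0)"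
  proof (rule sum.cong[OF refl])
    fix s assume s: "s \<in> insert t I"
    let ?C = "(\<lambda>x. x + (r + 1)) ` window_step t I s \<union> {(r + 1) + t..<(r + 1) + int n + t} \<union> Y"
    show "eps s I * \<beta> s * rows_det ?L ?C = (if window_step t I s \<in> ?W
      then eps s I * \<beta> s * (\<Sum>J\<in>?W. ?P (window_step t I s) J * X J) else 0)"
    proof (cases "window_step t I s \<in> ?W")
      case True
      have "rows_det ?L ?C = (\<Sum>J\<in>?W. ?P (window_step t I s) J * X J)"
        unfolding X_def by (subst Suc.IH[OF True Suc.prems(2)]) (use Suc.prems(3,4) in \<open>auto simp: add_ac\<close>)
      thus ?thesis using True by simp
    next
      case False
      have "rows_det ?L ?C = 0"
        by (rule rows_det_band_rows_window_left[OF _ Suc.prems(1) s False Suc.prems(2)])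
           (use \<beta> Suc.prems(4) in auto)
      thus ?thesis using False by simp
    qed
  qed
  also have "\<dots> = (\<Sum>K\<in>?W. transfer_mat \<beta> t I K * (\<Sum>J\<in>?W. ?P K J * X J))"
    by (rule sum_transfer_mat[OF Suc.prems(1), symmetric])
  also have "\<dots> = (\<Sum>J\<in>?W. (\<Sum>K\<in>?W. transfer_mat \<beta> t I K * ?P K J) * X J)"
    by (simp add: sum_distrib_left sum_distrib_right mult.assoc) (rule sum.swap)
  finally show ?case unfolding X_def by simp
qed
section \<open>The cofactors \<open>F_{k,l}\<close> as transfer matrix products\<close>

locale step_weights =
  fixes \<omega> :: "int \<Rightarrow> 'a::field" and a b :: int
  assumes a_pos: "a \<ge> 1" and b_pos: "b \<ge> 1"
    and \<omega>_outside: "\<And>s. s < -b \<or> a < s \<Longrightarrow> \<omega> s = 0"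
begin

lemma betaw_outside: "s < -b \<or> a < s \<Longrightarrow> betaw \<omega> s = 0"
  using \<omega>_outside[of s] a_pos b_pos unfolding betaw_def by auto

lemma betat_outside: "s < -b-1 \<or> a-1 < s \<Longrightarrow> betat \<omega> s = 0"
  using betaw_outside[of "s+1"] unfolding betat_def by auto

lemma I0_windows: "{0..a-1} \<in> windows (-b) a"
  using a_pos b_pos unfolding windows_def by auto

lemma I0t_windows: "{0..a-2} \<in> windows (-b-1) (a-1)"
  using a_pos b_pos unfolding windows_def by auto

lemma rows_det_unit_rows_window:
  assumes J: "J \<in> windows (-b) a"
  shows "rows_det (unit_rows (nat a) (int k)) ((\<lambda>x. x + int k) ` J) = (if J = {0..a-1} then 1 else (0::'a))"
proof (cases "J = {0..a-1}")
  case True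
  have "(\<lambda>x. x + int k) ` {0..a-1} = {int k..<int k + int (nat a)}"
    using a_pos by (simp add: atLeastLessThanPlusOne_atLeastAtMost_int[symmetric] add.commute)
  thus ?thesis using True rows_det_unit_rows[of "nat a" "int k"] by simp
next
  case False
  have "\<not> {0..a-1} \<subseteq> J"
  proof
    assume "{0..a-1} \<subseteq> J"
    moreover have "card {0..a-1} = card J" using J a_pos unfolding windows_def by auto
    ultimately show False using False card_subset_eq[OF windows_finite[OF J]] by metis
  qed
  then obtain j where j: "j \<in> {0..a-1}" "j \<notin> J" by blast
  have "rows_det (unit_rows (nat a) (int k)) ((\<lambda>x. x + int k) ` J) = (0::'a)"
  proof (rule rows_det_zero_row[where g = "\<lambda>x. if x = j + int k then 1 else 0"])
    show "(\<lambda>x. if x = j + int k then 1 else 0) \<in> set (unit_rows (nat a) (int k))"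
      by (rule unit_row_in_unit_rows) (use j a_pos in auto)
  qed (use j windows_finite[OF J] in auto)
  thus ?thesis using False by simp
qed

lemma rows_det_band_unit_rows:
  assumes K: "K \<in> windows (-b-1) (a-1)" and l: "l \<le> k"
  shows "rows_det (band_rows (betaw \<omega>) (int l) (k-l) @ unit_rows (nat a) (int k))
           ((\<lambda>x. x + int l) ` K \<union> {int l + a - 1..<int k + a}) =
         (\<Sum>L\<in>windows (-b) a. Umat a K L *
           mat_pow_on (windows (-b) a) (transfer_mat (betaw \<omega>) a) (k-l) L {0..a-1})"
proof (cases "-b-1 \<in> K")
  case True
  have "rows_det (band_rows (betaw \<omega>) (int l) (k-l) @ unit_rows (nat a) (int k))
           ((\<lambda>x. x + int l) ` K \<union> {int l + a - 1..<int k + a}) = (0::'a)"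
  proof (rule rows_det_zero_column[where c = "int l - b - 1"])
    show "int l - b - 1 \<in> (\<lambda>x. x + int l) ` K \<union> {int l + a - 1..<int k + a}"
      using True by (intro UnI1 image_eqI[of _ _ "-b-1"]) auto
    show "\<forall>g\<in>set (band_rows (betaw \<omega>) (int l) (k-l) @ unit_rows (nat a) (int k)). g (int l - b - 1) = 0"
      using l b_pos by (auto simp: band_rows_def shift_row_def unit_rows_def intro!: betaw_outside)
  qed (use windows_finite[OF K] in simp)
  moreover have "Umat a K L = (0::'a)" if "L \<in> windows (-b) a" for L
    using that True unfolding Umat_def windows_def by auto
  ultimately show ?thesis by simp
next
  case False
  let ?T = "mat_pow_on (windows (-b) a) (transfer_mat (betaw \<omega>) a) (k-l)"
  define I where "I = insert (a-1) K"
  have I: "I \<in> windows (-b) a"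
    using insert_top_windows[of K "-b" a] K False a_pos b_pos unfolding I_def by simp
  have cols: "(\<lambda>x. x + int l) ` K \<union> {int l + a - 1..<int k + a} =
      (\<lambda>x. x + int l) ` I \<union> {int l + a..<int l + int (k-l) + a} \<union> {}"
    using l unfolding I_def by auto
  have "rows_det (band_rows (betaw \<omega>) (int l) (k-l) @ unit_rows (nat a) (int k))
           ((\<lambda>x. x + int l) ` K \<union> {int l + a - 1..<int k + a}) =
     (\<Sum>J\<in>windows (-b) a. ?T I J *
        rows_det (unit_rows (nat a) (int k)) ((\<lambda>x. x + (int l + int (k-l))) ` J \<union> {}))"
    unfolding cols
    by (rule rows_det_band_rows[OF _ I]) (use l b_pos betaw_outside in \<open>auto simp: unit_rows_def\<close>)
  also have "\<dots> = (\<Sum>J\<in>windows (-b) a. ?T I J * (if J = {0..a-1} then 1 else 0))"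
    by (rule sum.cong[OF refl]) (use l rows_det_unit_rows_window in \<open>auto simp: of_nat_diff\<close>)
  also have "\<dots> = ?T I {0..a-1}"
    using I0_windows by (simp add: finite_windows sum.delta' if_distrib[of "\<lambda>x. _ * x"] cong: if_cong)
  also have "\<dots> = (\<Sum>L\<in>windows (-b) a. Umat a K L * ?T L {0..a-1})"
    using I by (simp add: Umat_def I_def if_distrib[of "\<lambda>x. x * _"] finite_windows sum.delta cong: if_cong)
  finally show ?thesis .
qed

lemma Fcof_eq_rows_det:
  assumes l: "l \<le> k"
  shows "Fcof \<omega> k l = rows_det (band_rows (betat \<omega>) 0 l @ band_rows (betaw \<omega>) (int l) (k-l) @
      unit_rows (nat a) (int k)) ({0..<int k} \<union> {int k..<int k + int (nat a)})"
proof -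
  define N where "N = (\<lambda>i j. IAmat \<omega> (if i < l then i else Suc i) (Suc j))"
  define R :: "(int \<Rightarrow> 'a) list" where
    "R = map (\<lambda>i c. - betat \<omega> (c - int i)) [0..<l] @ band_rows (betaw \<omega>) (int l) (k-l)"
  have "map N [0..<k] = map (\<lambda>f. f \<circ> int) R"
  proof (rule nth_equalityI)
    fix i assume i: "i < length (map N [0..<k])"
    show "map N [0..<k] ! i = map (\<lambda>f. f \<circ> int) R ! i"
    proof (cases "i < l")
      case True
      thus ?thesis using i
        by (auto simp: R_def nth_append N_def IAmat_def Amat_def betat_def betaw_def fun_eq_iff) (smt (verit))+
    next
      case False
      thus ?thesis using i l
        by (auto simp: R_def nth_append N_def IAmat_def Amat_def band_rows_def shift_row_def betaw_def fun_eq_iff)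
    qed
  qed (use l in \<open>simp add: R_def band_rows_def\<close>)
  hence "Fcof \<omega> k l = (-1)^l * rows_det R {0..<int k}"
    using rows_det_strict_mono_image[of "{0..<k}" int R]
    by (simp add: Fcof_def det_on_eq_rows_det N_def strict_mono_on_def image_int_atLeastLessThan)
  also have "rows_det R {0..<int k} =
      (-1)^l * rows_det (band_rows (betat \<omega>) 0 l @ band_rows (betaw \<omega>) (int l) (k-l)) {0..<int k}"
    unfolding R_def using rows_det_uminus_rows[of "\<lambda>i c. betat \<omega> (c - int i)" "[0..<l]"]
    by (simp add: band_rows_def shift_row_def)
  finally show ?thesis
    using rows_det_append_unit_rows[of "{0..<int k}" "int k"
        "band_rows (betat \<omega>) 0 l @ band_rows (betaw \<omega>) (int l) (k-l)" "nat a"]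
    by simp
qed

lemma Fcof_eq_transfer_products:
  assumes l: "l \<le> k"
  shows "Fcof \<omega> k l = (\<Sum>K\<in>windows (-b-1) (a-1).
      mat_pow_on (windows (-b-1) (a-1)) (transfer_mat (betat \<omega>) (a-1)) l {0..a-2} K *
      (\<Sum>L\<in>windows (-b) a. Umat a K L *
         mat_pow_on (windows (-b) a) (transfer_mat (betaw \<omega>) a) (k-l) L {0..a-1}))"
proof -
  define rest :: "(int \<Rightarrow> 'a) list" where
    "rest = band_rows (betaw \<omega>) (int l) (k-l) @ unit_rows (nat a) (int k)"
  have cols: "{0..<int k} \<union> {int k..<int k + int (nat a)} =
     (\<lambda>x. x + 0) ` {0..a-2} \<union> {0 + (a-1)..<0 + int l + (a-1)} \<union> {int l + a - 1..<int k + a}"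
    using l a_pos by auto
  have "Fcof \<omega> k l = (\<Sum>K\<in>windows (-b-1) (a-1).
      mat_pow_on (windows (-b-1) (a-1)) (transfer_mat (betat \<omega>) (a-1)) l {0..a-2} K *
      rows_det rest ((\<lambda>x. x + (0 + int l)) ` K \<union> {int l + a - 1..<int k + a}))"
    unfolding Fcof_eq_rows_det[OF l] cols append_assoc[symmetric] rest_def[symmetric]
    by (rule rows_det_band_rows[OF _ I0t_windows])
       (use l b_pos betat_outside betaw_outside in \<open>auto simp: rest_def band_rows_def shift_row_def unit_rows_def\<close>)
  thus ?thesis using rows_det_band_unit_rows l unfolding rest_def by simp
qed

end
section \<open>The generating function of \<open>G_k\<close>\<close>

lemma fps_of_poly_of_int: "fps_of_poly (of_int k :: 'a::comm_ring_1 poly) = of_int k"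
  by (simp add: of_int_poly fps_of_poly_const fps_of_int)

lemma fps_of_poly_det_on: "fps_of_poly (det_on X M) = det_on X (\<lambda>i j. fps_of_poly (M i j))"
  unfolding det_on_def by (simp add: fps_of_poly_sum fps_of_poly_mult fps_of_poly_prod fps_of_poly_of_int)

lemma fps_of_poly_adj_on: "fps_of_poly (adj_on X M i j) = adj_on X (\<lambda>i j. fps_of_poly (M i j)) i j"
  unfolding adj_on_def fps_of_poly_det_on by (rule arg_cong[where f = "det_on X"]) (auto simp: fun_eq_iff)

definition one_minus_z_mat :: "('i \<Rightarrow> 'i \<Rightarrow> 'a::comm_ring_1) \<Rightarrow> 'i \<Rightarrow> 'i \<Rightarrow> 'a poly" where
  "one_minus_z_mat M I J = (if I = J then 1 else 0) - [:0, M I J:]"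

definition neumann_series :: "'i set \<Rightarrow> ('i \<Rightarrow> 'i \<Rightarrow> 'a::comm_ring_1) \<Rightarrow> 'i \<Rightarrow> 'i \<Rightarrow> 'a fps" where
  "neumann_series X M I J = Abs_fps (\<lambda>n. mat_pow_on X M n I J)"

lemma fps_of_poly_one_minus_z_mat:
  "fps_of_poly (one_minus_z_mat M I J) = (if I = J then 1 else 0) - fps_X * fps_const (M I J)"
  by (rule fps_ext) (auto simp: one_minus_z_mat_def coeff_pCons split: nat.splits)

lemma one_minus_z_mat_mult_neumann_series:
  fixes M :: "'i \<Rightarrow> 'i \<Rightarrow> 'a::comm_ring_1"
  assumes fin: "finite X" and I: "I \<in> X"
  shows "(\<Sum>K\<in>X. fps_of_poly (one_minus_z_mat M I K) * neumann_series X M K J) = (if I = J then 1 else 0)"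
proof (rule fps_ext)
  fix n
  have "fps_nth (\<Sum>K\<in>X. fps_of_poly (one_minus_z_mat M I K) * neumann_series X M K J) n =
     (\<Sum>K\<in>X. (if I = K then mat_pow_on X M n K J else 0) -
        (if n = 0 then 0 else M I K * mat_pow_on X M (n - 1) K J))"
    unfolding fps_sum_nth fps_of_poly_one_minus_z_mat
    by (intro sum.cong refl) (auto simp: neumann_series_def algebra_simps)
  also have "\<dots> = mat_pow_on X M n I J - (if n = 0 then 0 else mat_pow_on X M n I J)"
    using fin I by (cases n) (auto simp: sum_subtractf sum.delta)
  finally show "fps_nth (\<Sum>K\<in>X. fps_of_poly (one_minus_z_mat M I K) * neumann_series X M K J) n =
      fps_nth (if I = J then 1 else 0 :: 'a fps) n"
    by (cases n) auto
qed

lemma adj_on_one_minus_z_mat: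
  fixes M :: "'i \<Rightarrow> 'i \<Rightarrow> 'a::comm_ring_1"
  assumes fin: "finite X" and I: "I \<in> X" and J: "J \<in> X"
  defines "F \<equiv> \<lambda>I J. fps_of_poly (one_minus_z_mat M I J)"
  shows "adj_on X F I J = det_on X F * neumann_series X M I J"
proof -
  have "adj_on X F I J = (\<Sum>L\<in>X. adj_on X F I L * (if L = J then 1 else 0))"
    using fin J by (simp add: sum.delta' if_distrib[of "\<lambda>x. _ * x"] cong: if_cong)
  also have "\<dots> = (\<Sum>L\<in>X. adj_on X F I L * (\<Sum>K\<in>X. F L K * neumann_series X M K J))"
    by (rule sum.cong[OF refl]) (simp add: one_minus_z_mat_mult_neumann_series[OF fin] F_def)
  also have "\<dots> = (\<Sum>L\<in>X. \<Sum>K\<in>X. adj_on X F I L * F L K * neumann_series X M K J)"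
    by (simp add: sum_distrib_left mult.assoc)
  also have "\<dots> = (\<Sum>K\<in>X. (\<Sum>L\<in>X. adj_on X F I L * F L K) * neumann_series X M K J)"
    by (subst sum.swap) (simp add: sum_distrib_right)
  also have "\<dots> = (\<Sum>K\<in>X. (if I = K then det_on X F else 0) * neumann_series X M K J)"
    by (rule sum.cong[OF refl]) (simp add: sum_adj_on_mult[OF fin I])
  also have "\<dots> = det_on X F * neumann_series X M I J"
    using fin I by (simp add: sum.delta if_distrib[of "\<lambda>x. x * _"] cong: if_cong)
  finally show ?thesis .
qed

lemma idxT_eq_windows: "idxT a b = windows (-b) a"
  unfolding idxT_def windows_def ..

lemma idxTt_eq_windows: "idxTt a b = windows (-b-1) (a-1)"
  unfolding idxTt_def windows_def by (simp add: algebra_simps)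

lemma zTmat_eq: "zTmat \<omega> a = one_minus_z_mat (transfer_mat (betaw \<omega>) a)"
  unfolding zTmat_def one_minus_z_mat_def Tmat_def transfer_mat_def by (simp add: fun_eq_iff)

lemma zTtmat_eq: "zTtmat \<omega> a = one_minus_z_mat (transfer_mat (betat \<omega>) (a - 1))"
  unfolding zTtmat_def one_minus_z_mat_def Ttmat_def transfer_mat_def by (simp add: fun_eq_iff)

context step_weights
begin

abbreviation "W \<equiv> windows (-b) a"
abbreviation "Wt \<equiv> windows (-b-1) (a-1)"
abbreviation "T \<equiv> transfer_mat (betaw \<omega>) a"
abbreviation "Tt \<equiv> transfer_mat (betat \<omega>) (a-1)"

lemma Gseq_fps_eq_sum_neumann_series:
  "Abs_fps (Gseq \<omega>) = (\<Sum>K\<in>Wt. \<Sum>L\<in>W.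
     neumann_series Wt Tt {0..a-2} K * fps_const (Umat a K L) * neumann_series W T L {0..a-1})"
proof (rule fps_ext)
  fix n
  have "fps_nth (\<Sum>K\<in>Wt. \<Sum>L\<in>W. neumann_series Wt Tt {0..a-2} K * fps_const (Umat a K L) *
      neumann_series W T L {0..a-1}) n =
     (\<Sum>K\<in>Wt. \<Sum>L\<in>W. \<Sum>i=0..n. mat_pow_on Wt Tt i {0..a-2} K *
       (Umat a K L * mat_pow_on W T (n - i) L {0..a-1}))"
    unfolding fps_sum_nth
  proof (intro sum.cong refl)
    fix K L
    have e: "neumann_series Wt Tt {0..a-2} K * fps_const (Umat a K L) * neumann_series W T L {0..a-1} =
        fps_const (Umat a K L) * (neumann_series Wt Tt {0..a-2} K * neumann_series W T L {0..a-1})"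
      by (simp only: mult_ac)
    show "fps_nth (neumann_series Wt Tt {0..a-2} K * fps_const (Umat a K L) *
        neumann_series W T L {0..a-1}) n = (\<Sum>i=0..n. mat_pow_on Wt Tt i {0..a-2} K *
        (Umat a K L * mat_pow_on W T (n - i) L {0..a-1}))"
      unfolding e fps_mult_left_const_nth
      unfolding fps_mult_nth neumann_series_def fps_nth_Abs_fps
      by (simp add: sum_distrib_left mult.left_commute)
  qed
  also have "\<dots> = (\<Sum>i=0..n. \<Sum>K\<in>Wt. \<Sum>L\<in>W. mat_pow_on Wt Tt i {0..a-2} K *
       (Umat a K L * mat_pow_on W T (n - i) L {0..a-1}))"
    by (subst sum.swap) (intro sum.cong refl sum.swap)
  also have "\<dots> = (\<Sum>i=0..n. Fcof \<omega> n i)"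
    by (intro sum.cong refl) (simp add: Fcof_eq_transfer_products sum_distrib_left)
  finally show "fps_nth (Abs_fps (Gseq \<omega>)) n = fps_nth (\<Sum>K\<in>Wt. \<Sum>L\<in>W. neumann_series Wt Tt {0..a-2} K *
      fps_const (Umat a K L) * neumann_series W T L {0..a-1}) n"
    by (simp add: Gseq_def)
qed

lemma Gseq_fps_mult_denominator:
  "Abs_fps (Gseq \<omega>) * fps_of_poly (Dtpoly \<omega> a b * Dpoly \<omega> a b) = fps_of_poly (Nt1poly \<omega> a b)"
proof -
  have Umat_fps: "fps_of_poly (Umat a K L) = fps_const (Umat a K L)" for K L
    by (simp add: Umat_def)
  define Dt where "Dt = det_on Wt (\<lambda>I J. fps_of_poly (one_minus_z_mat Tt I J))"
  define D where "D = det_on W (\<lambda>I J. fps_of_poly (one_minus_z_mat T I J))"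
  have adj_t: "fps_of_poly (adj_on Wt (one_minus_z_mat Tt) {0..a-2} K) = Dt * neumann_series Wt Tt {0..a-2} K"
    if "K \<in> Wt" for K
    unfolding fps_of_poly_adj_on Dt_def
    by (rule adj_on_one_minus_z_mat[OF finite_windows I0t_windows that])
  have adj: "fps_of_poly (adj_on W (one_minus_z_mat T) L {0..a-1}) = D * neumann_series W T L {0..a-1}"
    if "L \<in> W" for L
    unfolding fps_of_poly_adj_on D_def by (rule adj_on_one_minus_z_mat[OF finite_windows that I0_windows])
  have "fps_of_poly (Nt1poly \<omega> a b) =
     (\<Sum>K\<in>Wt. \<Sum>L\<in>W. fps_of_poly (adj_on Wt (one_minus_z_mat Tt) {0..a-2} K) * fps_const (Umat a K L) *
        fps_of_poly (adj_on W (one_minus_z_mat T) L {0..a-1}))"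
    unfolding Nt1poly_def idxT_eq_windows idxTt_eq_windows zTmat_eq zTtmat_eq
      fps_of_poly_sum fps_of_poly_mult Umat_fps
    ..
  also have "\<dots> = (Dt * D) * Abs_fps (Gseq \<omega>)"
    unfolding Gseq_fps_eq_sum_neumann_series sum_distrib_left
    by (intro sum.cong refl) (simp add: adj_t adj mult_ac)
  finally show ?thesis
    unfolding Dtpoly_def Dpoly_def Dt_def D_def idxT_eq_windows idxTt_eq_windows zTmat_eq zTtmat_eq
      fps_of_poly_mult fps_of_poly_det_on
    by (simp add: mult_ac)
qed

end
section \<open>Degree and constant term of \<open>det(1 - z M)\<close>\<close>

lemma degree_coeff_prod_linear:
  fixes f :: "'i \<Rightarrow> 'a::comm_ring_1 poly"
  assumes "finite A" "\<forall>i\<in>A. degree (f i) \<le> 1"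
  shows "degree (\<Prod>i\<in>A. f i) \<le> card A \<and> coeff (\<Prod>i\<in>A. f i) (card A) = (\<Prod>i\<in>A. coeff (f i) 1)"
  using assms
proof (induction A rule: finite_induct)
  case (insert x F)
  define P where "P = (\<Prod>i\<in>F. f i)"
  have P: "degree P \<le> card F" "coeff P (card F) = (\<Prod>i\<in>F. coeff (f i) 1)"
    using insert unfolding P_def by auto
  have fx: "degree (f x) \<le> 1" using insert by auto
  have "coeff (f x * P) (Suc (card F)) = (\<Sum>i\<le>Suc (card F). coeff (f x) i * coeff P (Suc (card F) - i))"
    by (rule coeff_mult)
  also have "\<dots> = (\<Sum>i\<le>Suc (card F). if i = 1 then coeff (f x) 1 * coeff P (card F) else 0)"
  proof (rule sum.cong[OF refl])
    fix i
    show "coeff (f x) i * coeff P (Suc (card F) - i) = (if i = 1 then coeff (f x) 1 * coeff P (card F) else 0)"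
      using P(1) fx by (cases "i = 0"; cases "i = 1") (auto simp: coeff_eq_0)
  qed
  finally have "coeff (f x * P) (Suc (card F)) = coeff (f x) 1 * coeff P (card F)" by simp
  moreover have "degree (f x * P) \<le> card (insert x F)"
    using degree_mult_le[of "f x" P] P(1) fx insert by simp
  ultimately show ?case using insert P(2) unfolding P_def by simp
qed simp

lemma det_one_minus_z_mat_top_coeff:
  fixes M :: "'i \<Rightarrow> 'i \<Rightarrow> 'a::comm_ring_1"
  assumes fin: "finite X"
  shows "degree (det_on X (one_minus_z_mat M)) \<le> card X"
    and "coeff (det_on X (one_minus_z_mat M)) (card X) = (-1) ^ card X * det_on X M"
proof -
  have linear: "\<forall>i\<in>X. degree (one_minus_z_mat M i (p i)) \<le> 1" for p
    unfolding one_minus_z_mat_def by (auto intro: order.trans[OF degree_diff_le])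
  have coeff1: "coeff (one_minus_z_mat M i j) (Suc 0) = - M i j" for i j
    by (simp add: one_minus_z_mat_def)
  have smult: "(of_int k :: 'a poly) * q = Polynomial.smult (of_int k) q" for k q
    by (simp add: of_int_poly)
  show "degree (det_on X (one_minus_z_mat M)) \<le> card X"
    unfolding det_on_def smult
  proof (rule degree_sum_le)
    fix p
    show "degree (Polynomial.smult (of_int (sign p)) (\<Prod>i\<in>X. one_minus_z_mat M i (p i))) \<le> card X"
      using degree_coeff_prod_linear[OF fin linear[of p]] by (meson degree_smult_le order.trans)
  qed (simp add: finite_permutations fin)
  have "coeff (det_on X (one_minus_z_mat M)) (card X) =
      (\<Sum>p\<in>{p. p permutes X}. of_int (sign p) * (\<Prod>i\<in>X. - M i (p i)))"
    unfolding det_on_def coeff_sum smult coeff_smult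
    by (intro sum.cong refl) (use degree_coeff_prod_linear[OF fin linear] in \<open>simp add: coeff1\<close>)
  also have "\<dots> = (-1) ^ card X * det_on X M"
    by (simp add: det_on_def prod_uminus sum_distrib_left mult_ac)
  finally show "coeff (det_on X (one_minus_z_mat M)) (card X) = (-1) ^ card X * det_on X M" .
qed

lemma coeff_0_det_one_minus_z_mat:
  fixes M :: "'i \<Rightarrow> 'i \<Rightarrow> 'a::comm_ring_1"
  assumes "finite X"
  shows "coeff (det_on X (one_minus_z_mat M)) 0 = 1"
proof -
  have "coeff (det_on X (one_minus_z_mat M)) 0 = det_on X (\<lambda>i j. if i = j then (1::'a) else 0)"
    unfolding poly_0_coeff_0[symmetric] det_on_def poly_sum poly_mult poly_prod poly_of_int
    by (intro sum.cong refl arg_cong2[where f="(*)"] prod.cong) (auto simp: one_minus_z_mat_def)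
  thus ?thesis using det_on_one[OF assms] by simp
qed

lemma degree_det_one_minus_z_mat:
  fixes M :: "'i \<Rightarrow> 'i \<Rightarrow> 'a::idom"
  assumes "finite X" "det_on X M \<noteq> 0"
  shows "degree (det_on X (one_minus_z_mat M)) = card X"
  using det_one_minus_z_mat_top_coeff[OF assms(1), of M] assms(2)
  by (intro antisym le_degree) simp_all

section \<open>Nonsingularity of the transfer matrix\<close>

text \<open>If \<open>\<beta>\<close> does not vanish at either end of its support \<open>[lo, t]\<close>, exactly one
  permutation of the windows contributes to the determinant of the transfer matrix: a window
  containing \<open>lo\<close> must drop \<open>lo\<close>, and then every other window must drop \<open>t\<close>.\<close>

definition forced_step :: "int \<Rightarrow> int \<Rightarrow> int set \<Rightarrow> int set" where
  "forced_step lo t I = (if lo \<in> I then window_step t I lo else window_step t I t)"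

lemma transfer_mat_nonzero_imp_window_step:
  assumes I: "I \<in> windows lo t" and K: "K \<in> windows lo t" and "transfer_mat \<beta> t I K \<noteq> 0"
  shows "\<exists>s\<in>insert t I. K = window_step t I s"
proof (rule ccontr)
  assume "\<not> ?thesis"
  hence "transfer_mat \<beta> t I K = 0" unfolding transfer_mat_eq_sum[OF I K] by (intro sum.neutral) auto
  thus False using assms(3) by simp
qed

lemma pred_top_in_window_step:
  "s \<in> insert t I \<Longrightarrow> t - 1 \<in> window_step t I s \<longleftrightarrow> s \<noteq> t"
  unfolding window_step_def by force

lemma window_step_drops_lo:
  assumes "lo \<in> I" "window_step t I s \<in> windows lo t"
  shows "s = lo"
proof (rule ccontr)
  assume "s \<noteq> lo"
  hence "lo - 1 \<in> window_step t I s" using assms(1) unfolding window_step_def by force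
  thus False using assms(2) unfolding windows_def by auto
qed

context
  fixes \<beta> :: "int \<Rightarrow> 'a::field" and lo t :: int
  assumes lo: "lo < 0" and t: "0 \<le> t" and \<beta>_lo: "\<beta> lo \<noteq> 0" and \<beta>_t: "\<beta> t \<noteq> 0"
begin

lemma forced_step_windows:
  assumes I: "I \<in> windows lo t"
  shows "forced_step lo t I \<in> windows lo t"
proof -
  have sub: "I \<subseteq> {lo..t-1}" using I unfolding windows_def by auto
  have "window_step t I lo \<subseteq> {lo..t-1}" if "lo \<in> I"
    using sub lo t unfolding window_step_def by auto
  moreover have "window_step t I t \<subseteq> {lo..t-1}" if "lo \<notin> I"
  proof
    fix y assume "y \<in> window_step t I t"
    then obtain x where x: "x \<in> I" "y = x - 1"
      using windows_top_notin[OF I] unfolding window_step_def by auto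
    moreover have "x \<noteq> lo" using that x by auto
    ultimately show "y \<in> {lo..t-1}" using sub by auto
  qed
  moreover have "card (forced_step lo t I) = nat t"
    using card_window_step[OF I] by (simp add: forced_step_def)
  ultimately show ?thesis by (auto simp: windows_def forced_step_def)
qed

lemma transfer_mat_forced_step:
  assumes I: "I \<in> windows lo t"
  shows "transfer_mat \<beta> t I (forced_step lo t I) \<noteq> 0"
proof -
  define s where "s = (if lo \<in> I then lo else t)"
  have s: "s \<in> insert t I" "forced_step lo t I = window_step t I s"
    unfolding s_def forced_step_def by auto
  have "\<beta> s \<noteq> 0" using \<beta>_lo \<beta>_t by (simp add: s_def)
  moreover have "transfer_mat \<beta> t I (forced_step lo t I) = eps s I * \<beta> s"
    unfolding s(2) using transfer_mat_window_step[OF I s(1)] forced_step_windows[OF I] s(2) by simp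
  ultimately show ?thesis by (simp add: eps_def)
qed

lemma forced_step_surj:
  assumes J: "J \<in> windows lo t" and tJ: "t - 1 \<in> J"
  shows "\<exists>I\<in>windows lo t. lo \<in> I \<and> forced_step lo t I = J"
proof -
  define I where "I = insert lo (shift1 J - {t})"
  have Jsub: "J \<subseteq> {lo..t-1}" and cJ: "card J = nat t" using J unfolding windows_def by auto
  have sJ: "shift1 J \<subseteq> {lo+1..t}" using Jsub unfolding shift1_def by auto
  have tsJ: "t \<in> shift1 J" unfolding shift1_def by (rule image_eqI[of _ _ "t-1"]) (use tJ in auto)
  have lonot: "lo \<notin> shift1 J - {t}" using sJ by auto
  have fin: "finite (shift1 J)" using windows_finite[OF J] unfolding shift1_def by simp
  have c0: "card (shift1 J) > 0" using fin tsJ card_gt_0_iff by blast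
  have "card I = Suc (card (shift1 J - {t}))" unfolding I_def using lonot fin by simp
  also have "\<dots> = card (shift1 J)" using card_Diff_singleton[OF tsJ] c0 by simp
  also have "\<dots> = nat t" using card_shift1 cJ by simp
  finally have cI: "card I = nat t" .
  have "I \<subseteq> {lo..t-1}" using sJ lo t unfolding I_def by auto
  hence IW: "I \<in> windows lo t" unfolding windows_def using cI by simp
  have "t \<noteq> lo" using lo t by simp
  hence "insert t I - {lo} = insert t (shift1 J - {t})" unfolding I_def using lonot by blast
  also have "\<dots> = shift1 J" using tsJ by blast
  finally have "window_step t I lo = J" using window_step_eq_iff by metis
  moreover have "lo \<in> I" unfolding I_def by simp
  ultimately show ?thesis using IW unfolding forced_step_def by auto
qed

lemma inj_on_forced_step: "inj_on (forced_step lo t) (windows lo t)"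
proof
  fix I1 I2 assume I1: "I1 \<in> windows lo t" and I2: "I2 \<in> windows lo t"
    and e: "forced_step lo t I1 = forced_step lo t I2"
  have lo_iff: "t - 1 \<in> forced_step lo t I \<longleftrightarrow> lo \<in> I" for I
  proof (cases "lo \<in> I")
    case True thus ?thesis using pred_top_in_window_step[of lo t I] lo t unfolding forced_step_def by simp
  next
    case False thus ?thesis using pred_top_in_window_step[of t t I] unfolding forced_step_def by simp
  qed
  have same: "lo \<in> I1 \<longleftrightarrow> lo \<in> I2" using lo_iff[of I1] lo_iff[of I2] e by simp
  have n1: "t \<notin> I1" and n2: "t \<notin> I2" using windows_top_notin I1 I2 by auto
  show "I1 = I2"
  proof (cases "lo \<in> I1")
    case True
    hence "window_step t I1 lo = window_step t I2 lo" using e same unfolding forced_step_def by simp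
    hence h: "insert t I1 - {lo} = insert t I2 - {lo}" using shift1_window_step by metis
    have "I1 = insert lo (insert t I1 - {lo} - {t})" using True n1 by auto
    also have "\<dots> = I2" using h True same n2 by auto
    finally show ?thesis .
  next
    case False
    hence "window_step t I1 t = window_step t I2 t" using e same unfolding forced_step_def by simp
    hence "insert t I1 - {t} = insert t I2 - {t}" using shift1_window_step by metis
    thus ?thesis using n1 n2 by auto
  qed
qed

definition "forced_perm = (\<lambda>I. if I \<in> windows lo t then forced_step lo t I else I)"

lemma forced_perm_permutes: "forced_perm permutes windows lo t"
proof (rule bij_imp_permutes)
  have "forced_step lo t ` windows lo t = windows lo t"
    by (rule endo_inj_surj[OF finite_windows _ inj_on_forced_step]) (use forced_step_windows in auto)
  hence "bij_betw (forced_step lo t) (windows lo t) (windows lo t)"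
    using inj_on_forced_step by (simp add: bij_betw_def)
  thus "bij_betw forced_perm (windows lo t) (windows lo t)"
    by (rule bij_betw_cong[THEN iffD1, rotated]) (simp add: forced_perm_def)
qed (simp add: forced_perm_def)

lemma nonzero_permutation_unique:
  assumes p: "p permutes windows lo t" and nz: "\<forall>I\<in>windows lo t. transfer_mat \<beta> t I (p I) \<noteq> 0"
  shows "p = forced_perm"
proof -
  have pW: "p I \<in> windows lo t" if "I \<in> windows lo t" for I using p that by (simp add: permutes_in_image)
  have step: "\<exists>s\<in>insert t I. p I = window_step t I s" if I: "I \<in> windows lo t" for I
    using transfer_mat_nonzero_imp_window_step[OF I pW[OF I]] nz I by blast
  have with_lo: "p I = forced_step lo t I" if I: "I \<in> windows lo t" and loI: "lo \<in> I" for I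
  proof -
    obtain s where s: "s \<in> insert t I" "p I = window_step t I s" using step[OF I] by blast
    hence "s = lo" using window_step_drops_lo[OF loI] pW[OF I] by metis
    thus ?thesis using s loI unfolding forced_step_def by simp
  qed
  have without_lo: "p I = forced_step lo t I" if I: "I \<in> windows lo t" and loI: "lo \<notin> I" for I
  proof -
    obtain s where s: "s \<in> insert t I" "p I = window_step t I s" using step[OF I] by blast
    have "s = t"
    proof (rule ccontr)
      \<comment> \<open>otherwise \<open>p I\<close> is already the image of a window containing \<open>lo\<close>\<close>
      assume "s \<noteq> t"
      hence "t - 1 \<in> p I" using pred_top_in_window_step[OF s(1)] s(2) by simp
      then obtain I' where I': "I' \<in> windows lo t" "lo \<in> I'" "forced_step lo t I' = p I"
        using forced_step_surj[OF pW[OF I]] by blast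
      hence "p I' = p I" using with_lo[OF I'(1,2)] by simp
      hence "I' = I" using permutes_inj[OF p] by (metis injD)
      thus False using I'(2) loI by simp
    qed
    thus ?thesis using s loI unfolding forced_step_def by simp
  qed
  show ?thesis
  proof
    fix I show "p I = forced_perm I"
    proof (cases "I \<in> windows lo t")
      case True thus ?thesis using with_lo without_lo unfolding forced_perm_def by (cases "lo \<in> I") simp_all
    qed (use p in \<open>simp add: forced_perm_def permutes_not_in\<close>)
  qed
qed

lemma det_on_transfer_mat_nonzero: "det_on (windows lo t) (transfer_mat \<beta> t) \<noteq> 0"
proof -
  define g where "g = (\<lambda>p. of_int (sign p) * (\<Prod>I\<in>windows lo t. transfer_mat \<beta> t I (p I)) :: 'a)"
  have "det_on (windows lo t) (transfer_mat \<beta> t) =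
      (\<Sum>p\<in>{p. p permutes windows lo t}. if p = forced_perm then g p else 0)"
    unfolding det_on_def g_def
  proof (rule sum.cong[OF refl])
    fix p assume p: "p \<in> {p. p permutes windows lo t}"
    show "of_int (sign p) * (\<Prod>I\<in>windows lo t. transfer_mat \<beta> t I (p I)) =
      (if p = forced_perm then of_int (sign p) * (\<Prod>I\<in>windows lo t. transfer_mat \<beta> t I (p I)) else 0)"
    proof (cases "p = forced_perm")
      case False
      hence "\<exists>I\<in>windows lo t. transfer_mat \<beta> t I (p I) = 0" using nonzero_permutation_unique p by blast
      hence "(\<Prod>I\<in>windows lo t. transfer_mat \<beta> t I (p I)) = 0" using finite_windows by (simp add: prod_zero_iff)
      thus ?thesis using False by simp
    qed simp
  qed
  also have "\<dots> = g forced_perm"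
    using forced_perm_permutes finite_permutations[OF finite_windows] by (simp add: sum.delta)
  also have "g forced_perm \<noteq> 0"
  proof -
    have "(\<Prod>I\<in>windows lo t. transfer_mat \<beta> t I (forced_perm I)) \<noteq> 0"
      using transfer_mat_forced_step finite_windows by (simp add: prod_zero_iff forced_perm_def)
    moreover have "(of_int (sign forced_perm) :: 'a) \<noteq> 0" by (cases rule: sign_cases[of forced_perm]) auto
    ultimately show ?thesis unfolding g_def by simp
  qed
  finally show ?thesis .
qed

end
section \<open>Rational generating functions and linear recurrences\<close>

lemma fps_eq_divide_of_mult_eq:
  fixes f :: "'a::field fps"
  assumes "f * fps_of_poly P = fps_of_poly N" and "coeff P 0 \<noteq> 0"
  shows "f = fps_of_poly N / fps_of_poly P"
proof -
  have P0: "fps_nth (fps_of_poly P) 0 \<noteq> 0" using assms(2) by simp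
  have "fps_of_poly N / fps_of_poly P = f * (fps_of_poly P * inverse (fps_of_poly P))"
    unfolding fps_divide_unit[OF P0] assms(1)[symmetric] by (simp add: mult.assoc)
  thus ?thesis using inverse_mult_eq_1'[OF P0] by simp
qed

lemma linear_recurrence_of_mult_poly:
  fixes P N :: "'a::comm_ring_1 poly"
  assumes gf: "Abs_fps g * fps_of_poly P = fps_of_poly N" and P0: "coeff P 0 = 1"
  shows "\<exists>c. c 0 = 1 \<and> c (degree P) \<noteq> 0 \<and> (\<exists>n0. \<forall>n\<ge>n0. (\<Sum>i\<le>degree P. c i * g (n - i)) = 0)"
proof (intro exI conjI)
  show "coeff P 0 = 1" and "coeff P (degree P) \<noteq> 0" using P0 by auto
  show "\<forall>n\<ge>degree P + degree N + 1. (\<Sum>i\<le>degree P. coeff P i * g (n - i)) = 0"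
  proof (intro allI impI)
    fix n assume n: "degree P + degree N + 1 \<le> n"
    have "(\<Sum>i\<le>degree P. coeff P i * g (n - i)) = (\<Sum>i=0..n. coeff P i * g (n - i))"
      using n by (intro sum.mono_neutral_left) (auto simp: coeff_eq_0)
    also have "\<dots> = fps_nth (fps_of_poly P * Abs_fps g) n" by (simp add: fps_mult_nth)
    also have "\<dots> = coeff N n" using gf by (simp add: mult.commute)
    finally show "(\<Sum>i\<le>degree P. coeff P i * g (n - i)) = 0" using n by (simp add: coeff_eq_0)
  qed
qed

section \<open>Degree of the denominator and the inverse of \<open>1 - A_k\<close>\<close>

lemma card_windows: "card (windows lo t) = nat (t - lo) choose nat t"
  unfolding windows_def by (subst n_subsets) simp_all

lemma adj_on_IAmat_eq_Fcof:
  assumes l: "l \<le> k"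
  shows "adj_on {0..k} (IAmat \<omega>) 0 l = Fcof \<omega> k l"
proof -
  define A where "A = mat (Suc k) (Suc k) (\<lambda>(i,j). IAmat \<omega> i j)"
  have "{0..k} = {0..<Suc k}" by auto
  hence "adj_on {0..k} (IAmat \<omega>) 0 l = cofactor A l 0"
    unfolding A_def using l by (simp add: adj_on_atLeastLessThan)
  also have "mat_delete A l 0 = mat k k (\<lambda>(i,j). IAmat \<omega> (if i < l then i else Suc i) (Suc j))"
    by (rule eq_matI) (auto simp: mat_delete_def A_def)
  hence "cofactor A l 0 = Fcof \<omega> k l"
    unfolding cofactor_def Fcof_def det_on_atLeastLessThan by simp
  finally show ?thesis .
qed

lemma sum_inv_on_IAmat:
  fixes \<omega> :: "int \<Rightarrow> 'a::field"
  assumes "Fdet \<omega> (Suc k) \<noteq> 0"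
  shows "(\<Sum>l = 0..k. inv_on {0..k} (IAmat \<omega>) 0 l) = Gseq \<omega> k / Fdet \<omega> (Suc k)"
proof -
  have "inv_on {0..k} (IAmat \<omega>) 0 l = Fcof \<omega> k l / Fdet \<omega> (Suc k)" if "l \<in> {0..k}" for l
    using inv_on_eq_adj_on[of "{0..k}" "IAmat \<omega>" 0 l] assms that
    by (simp add: Fdet_def adj_on_IAmat_eq_Fcof)
  thus ?thesis by (simp add: Gseq_def sum_divide_distrib)
qed

context step_weights
begin

lemma Dpoly_eq: "Dpoly \<omega> a b = det_on W (one_minus_z_mat T)"
  unfolding Dpoly_def idxT_eq_windows zTmat_eq ..

lemma Dtpoly_eq: "Dtpoly \<omega> a b = det_on Wt (one_minus_z_mat Tt)"
  unfolding Dtpoly_def idxTt_eq_windows zTtmat_eq ..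

lemma coeff_0_denominator: "coeff (Dtpoly \<omega> a b * Dpoly \<omega> a b) 0 = 1"
  by (simp add: coeff_mult_0 Dpoly_eq Dtpoly_eq coeff_0_det_one_minus_z_mat finite_windows)

lemma degree_denominator:
  assumes "\<omega> a \<noteq> 0" and "\<omega> (-b) \<noteq> 0"
  shows "degree (Dtpoly \<omega> a b * Dpoly \<omega> a b) = nat (a + b + 1) choose nat a"
proof -
  have "det_on W T \<noteq> 0"
    by (rule det_on_transfer_mat_nonzero) (use assms a_pos b_pos in \<open>auto simp: betaw_def\<close>)
  hence D: "degree (Dpoly \<omega> a b) = nat (a + b) choose nat a"
    unfolding Dpoly_eq by (simp add: degree_det_one_minus_z_mat finite_windows card_windows)
  have "det_on Wt Tt \<noteq> 0"
    by (rule det_on_transfer_mat_nonzero) (use assms a_pos b_pos in \<open>auto simp: betat_def betaw_def\<close>)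
  hence Dt: "degree (Dtpoly \<omega> a b) = nat (a + b) choose nat (a - 1)"
    unfolding Dtpoly_eq by (simp add: degree_det_one_minus_z_mat finite_windows card_windows)
  have "Dpoly \<omega> a b \<noteq> 0" "Dtpoly \<omega> a b \<noteq> 0"
    using coeff_0_denominator by auto
  moreover have "nat (a + b + 1) = Suc (nat (a + b))" "nat a = Suc (nat (a - 1))"
    using a_pos b_pos by simp_all
  ultimately show ?thesis using D Dt by (simp add: degree_mult_eq)
qed

end

lemma step_weights_Max_Min:
  assumes "finite S" "1 \<le> Max S" "1 \<le> - Min S" "\<forall>s. s \<notin> S \<longrightarrow> \<omega> s = 0"
  shows "step_weights \<omega> (Max S) (- Min S)"
proof
  fix s assume s: "s < - (- Min S) \<or> Max S < s"
  have "s \<notin> S"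
  proof
    assume "s \<in> S"
    hence "s \<le> Max S" "Min S \<le> s" using Max_ge[OF assms(1)] Min_le[OF assms(1)] by auto
    thus False using s by linarith
  qed
  thus "\<omega> s = 0" using assms(4) by simp
qed (use assms(2,3) in simp_all)

theorem mainTheorem10:
  fixes S :: "int set" and \<omega> :: "int \<Rightarrow> 'a::field_char_0"
    and a b :: int
  defines "a \<equiv> Max S" and "b \<equiv> - Min S"
  assumes "finite S" and "S \<noteq> {}" and "a \<ge> 1" and "b \<ge> 1"
    and "\<forall>s. s \<notin> S \<longrightarrow> \<omega> s = 0"
    and "\<omega> a \<noteq> 0" and "\<omega> (- b) \<noteq> 0"
  shows "Abs_fps (Gseq \<omega>) =
           fps_of_poly (Nt1poly \<omega> a b) / fps_of_poly (Dtpoly \<omega> a b * Dpoly \<omega> a b)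
       \<and> coeff (Dtpoly \<omega> a b * Dpoly \<omega> a b) 0 = 1
       \<and> degree (Dtpoly \<omega> a b * Dpoly \<omega> a b) = nat (a + b + 1) choose nat a
       \<and> (\<exists>c :: nat \<Rightarrow> 'a. c 0 = 1 \<and> c (nat (a + b + 1) choose nat a) \<noteq> 0 \<and>
            (\<exists>n0. \<forall>n\<ge>n0. (\<Sum>i\<le>nat (a + b + 1) choose nat a. c i * Gseq \<omega> (n - i)) = 0))
       \<and> (\<forall>k. Fdet \<omega> (Suc k) \<noteq> 0 \<longrightarrow>
            (\<Sum>l = 0..k. inv_on {0..k} (IAmat \<omega>) 0 l) = Gseq \<omega> k / Fdet \<omega> (Suc k))"
proof -
  interpret step_weights \<omega> a b
    using step_weights_Max_Min[OF assms(3)] assms(5-7) by (simp add: a_def b_def)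
  note gf = Gseq_fps_mult_denominator
  have deg: "degree (Dtpoly \<omega> a b * Dpoly \<omega> a b) = nat (a + b + 1) choose nat a"
    by (rule degree_denominator[OF assms(8,9)])
  have "Abs_fps (Gseq \<omega>) = fps_of_poly (Nt1poly \<omega> a b) / fps_of_poly (Dtpoly \<omega> a b * Dpoly \<omega> a b)"
    by (rule fps_eq_divide_of_mult_eq[OF gf]) (simp add: coeff_0_denominator)
  moreover have "\<exists>c :: nat \<Rightarrow> 'a. c 0 = 1 \<and> c (nat (a + b + 1) choose nat a) \<noteq> 0 \<and>
      (\<exists>n0. \<forall>n\<ge>n0. (\<Sum>i\<le>nat (a + b + 1) choose nat a. c i * Gseq \<omega> (n - i)) = 0)"
    using linear_recurrence_of_mult_poly[OF gf coeff_0_denominator] unfolding deg .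
  ultimately show ?thesis using coeff_0_denominator deg sum_inv_on_IAmat by blast
qed

end
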